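(* Let $K$ be a number field and let $\mathcal{D}=(\mathcal{O};\mathfrak{m},\Sigma)$, $\mathcal{D}'=(\mathcal{O}';\mathfrak{m}',\Sigma')$ be level data for $K$ with $\mathcal{O}\subseteq\mathcal{O}'$, $\mathfrak{m}\mathcal{O}'\subseteq\mathfrak{m}'$ and $\Sigma\supseteq\Sigma'$. There exists a unique homomorphism $\overline{\mathrm{ext}}=\overline{\mathrm{ext}}^{\mathcal{D}'}_{\mathcal{D}}:\mathrm{Cl}_{\mathfrak{m},\Sigma}(\mathcal{O})\to\mathrm{Cl}_{\mathfrak{m}',\Sigma'}(\mathcal{O}')$ satisfying $\overline{\mathrm{ext}}([\mathfrak{a}])=[\mathfrak{a}\mathcal{O}']$ for all $\mathfrak{a}\in J^*_{\mathfrak{m}}(\mathcal{O})$, and this map is surjective. Moreover, if $\mathcal{D}''=(\mathcal{O}'';\mathfrak{m}'',\Sigma'')$ is another level datum with $\mathcal{O}'\subseteq\mathcal{O}''$, $\mathfrak{m}'\mathcal{O}''\subseteq\mathfrak{m}''$ and $\Sigma'\supseteq\Sigma''$, then $\overline{\mathrm{ext}}^{\mathcal{D}''}_{\mathcal{D}'}\circ\overline{\mathrm{ext}}^{\mathcal{D}'}_{\mathcal{D}}=\overline{\mathrm{ext}}^{\mathcal{D}''}_{\mathcal{D}}$.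
   Context: A level datum $(\mathcal O;\mathfrak m,\Sigma)$: $\mathcal O$ an order of $K$ (subring containing 1, free $\mathbb Z$-module of rank $[K:\mathbb Q]$), $\mathfrak m$ a nonzero integral $\mathcal O$-ideal, $\Sigma$ a set of real embeddings of $K$. $J^*_{\mathfrak m}(\mathcal O)$: group of invertible fractional $\mathcal O$-ideals coprime to $\mathfrak m$ (a fractional ideal $\mathfrak a$ is coprime to $\mathfrak m$ if $\mathfrak a=(\mathfrak a_1:\mathfrak b_1)=\{x\in K:x\mathfrak b_1\subseteq\mathfrak a_1\}$ with $\mathfrak a_1$ integral, $\mathfrak b_1$ invertible integral, $\mathfrak a_1+\mathfrak m=\mathfrak b_1+\mathfrak m=\mathcal O$). $P_{\mathfrak m,\Sigma}(\mathcal O)=\{\alpha\mathcal O:\alpha\in K^\times,\alpha-1\in\mathfrak m\mathcal O[S_{\mathfrak m}^{-1}],\rho(\alpha)>0\ \forall\rho\in\Sigma\}$ with $S_{\mathfrak m}=\{a\in\mathcal O:a\mathcal O+\mathfrak m=\mathcal O\}$; $\mathrm{Cl}_{\mathfrak m,\Sigma}(\mathcal O)=J^*_{\mathfrak m}(\mathcal O)/P_{\mathfrak m,\Sigma}(\mathcal O)$. *)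

theory Defs
  imports Complex_Main "HOL-Algebra.Coset"
begin

definition Q_basis :: "(nat \<Rightarrow> 'k::field_char_0) \<Rightarrow> nat \<Rightarrow> bool" where
  "Q_basis b n \<longleftrightarrow>
     (\<forall>c::nat \<Rightarrow> rat. (\<Sum>i<n. of_rat (c i) * b i) = 0 \<longrightarrow> (\<forall>i<n. c i = 0)) \<and>
     (\<forall>x. \<exists>c::nat \<Rightarrow> rat. x = (\<Sum>i<n. of_rat (c i) * b i))"

definition number_field :: "'k::field_char_0 itself \<Rightarrow> bool" where
  "number_field _ \<longleftrightarrow> (\<exists>n (b :: nat \<Rightarrow> 'k). Q_basis b n)"

definition nf_degree :: "'k::field_char_0 itself \<Rightarrow> nat" where
  "nf_degree _ = (THE n. \<exists>b :: nat \<Rightarrow> 'k. Q_basis b n)"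

definition Z_span :: "(nat \<Rightarrow> 'k::field_char_0) \<Rightarrow> nat \<Rightarrow> 'k set" where
  "Z_span w n = {x. \<exists>c::nat \<Rightarrow> int. x = (\<Sum>i<n. of_int (c i) * w i)}"

definition Z_indep :: "(nat \<Rightarrow> 'k::field_char_0) \<Rightarrow> nat \<Rightarrow> bool" where
  "Z_indep w n \<longleftrightarrow>
     (\<forall>c::nat \<Rightarrow> int. (\<Sum>i<n. of_int (c i) * w i) = 0 \<longrightarrow> (\<forall>i<n. c i = 0))"

definition is_subring :: "'k::field_char_0 set \<Rightarrow> bool" where
  "is_subring Ord \<longleftrightarrow> 1 \<in> Ord \<and> (\<forall>x\<in>Ord. \<forall>y\<in>Ord. x + y \<in> Ord \<and> x - y \<in> Ord \<and> x * y \<in> Ord)"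

definition is_order :: "'k::field_char_0 set \<Rightarrow> bool" where
  "is_order Ord \<longleftrightarrow> is_subring Ord \<and>
     (\<exists>w. (\<forall>i<nf_degree TYPE('k). w i \<in> Ord) \<and> Z_indep w (nf_degree TYPE('k)) \<and>
          Ord = Z_span w (nf_degree TYPE('k)))"

definition ideal_mult :: "'k::field_char_0 set \<Rightarrow> 'k set \<Rightarrow> 'k set" where
  "ideal_mult A B = {x. \<exists>k (a :: nat \<Rightarrow> 'k) b. (\<forall>i<k. a i \<in> A \<and> b i \<in> B) \<and> x = (\<Sum>i<k. a i * b i)}"

definition ideal_add :: "'k::field_char_0 set \<Rightarrow> 'k set \<Rightarrow> 'k set" where
  "ideal_add A B = {a + b | a b. a \<in> A \<and> b \<in> B}"

definition ideal_colon :: "'k::field_char_0 set \<Rightarrow> 'k set \<Rightarrow> 'k set" where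
  "ideal_colon A B = {x. \<forall>b\<in>B. x * b \<in> A}"

definition principal :: "'k::field_char_0 \<Rightarrow> 'k set \<Rightarrow> 'k set" where
  "principal \<alpha> Ord = {\<alpha> * x | x. x \<in> Ord}"

definition O_submodule :: "'k::field_char_0 set \<Rightarrow> 'k set \<Rightarrow> bool" where
  "O_submodule Ord M \<longleftrightarrow> 0 \<in> M \<and> (\<forall>x\<in>M. \<forall>y\<in>M. x + y \<in> M \<and> x - y \<in> M) \<and>
     (\<forall>r\<in>Ord. \<forall>x\<in>M. r * x \<in> M)"

definition integral_ideal :: "'k::field_char_0 set \<Rightarrow> 'k set \<Rightarrow> bool" where
  "integral_ideal Ord A \<longleftrightarrow> O_submodule Ord A \<and> A \<subseteq> Ord"

definition fractional_ideal :: "'k::field_char_0 set \<Rightarrow> 'k set \<Rightarrow> bool" where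
  "fractional_ideal Ord M \<longleftrightarrow> O_submodule Ord M \<and> M \<noteq> {0} \<and>
     (\<exists>d\<in>Ord. d \<noteq> 0 \<and> (\<forall>x\<in>M. d * x \<in> Ord))"

definition invertible_ideal :: "'k::field_char_0 set \<Rightarrow> 'k set \<Rightarrow> bool" where
  "invertible_ideal Ord M \<longleftrightarrow> fractional_ideal Ord M \<and>
     (\<exists>N. fractional_ideal Ord N \<and> ideal_mult M N = Ord)"

definition coprime_to :: "'k::field_char_0 set \<Rightarrow> 'k set \<Rightarrow> 'k set \<Rightarrow> bool" where
  "coprime_to Ord m a \<longleftrightarrow> (\<exists>a1 b1. integral_ideal Ord a1 \<and> integral_ideal Ord b1 \<and>
     invertible_ideal Ord b1 \<and> ideal_add a1 m = Ord \<and> ideal_add b1 m = Ord \<and> a = ideal_colon a1 b1)"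

definition J_star :: "'k::field_char_0 set \<Rightarrow> 'k set \<Rightarrow> 'k set set" where
  "J_star Ord m = {a. invertible_ideal Ord a \<and> coprime_to Ord m a}"

definition S_m :: "'k::field_char_0 set \<Rightarrow> 'k set \<Rightarrow> 'k set" where
  "S_m Ord m = {a \<in> Ord. ideal_add (principal a Ord) m = Ord}"

definition localize :: "'k::field_char_0 set \<Rightarrow> 'k set \<Rightarrow> 'k set" where
  "localize Ord S = {x / s | x s. x \<in> Ord \<and> s \<in> S}"

definition real_embedding :: "('k::field_char_0 \<Rightarrow> real) \<Rightarrow> bool" where
  "real_embedding \<rho> \<longleftrightarrow> \<rho> 1 = 1 \<and> (\<forall>x y. \<rho> (x + y) = \<rho> x + \<rho> y \<and> \<rho> (x * y) = \<rho> x * \<rho> y)"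

definition P_ray :: "'k::field_char_0 set \<Rightarrow> 'k set \<Rightarrow> ('k \<Rightarrow> real) set \<Rightarrow> 'k set set" where
  "P_ray Ord m \<Sigma> = {principal \<alpha> Ord | \<alpha>. \<alpha> \<noteq> 0 \<and>
      \<alpha> - 1 \<in> ideal_mult m (localize Ord (S_m Ord m)) \<and> (\<forall>\<rho>\<in>\<Sigma>. \<rho> \<alpha> > 0)}"

definition level_datum :: "'k::field_char_0 set \<Rightarrow> 'k set \<Rightarrow> ('k \<Rightarrow> real) set \<Rightarrow> bool" where
  "level_datum Ord m \<Sigma> \<longleftrightarrow> is_order Ord \<and> integral_ideal Ord m \<and> m \<noteq> {0} \<and>
     (\<forall>\<rho>\<in>\<Sigma>. real_embedding \<rho>)"

definition ideal_group :: "'k::field_char_0 set \<Rightarrow> 'k set \<Rightarrow> 'k set monoid" where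
  "ideal_group Ord m = \<lparr>carrier = J_star Ord m, mult = ideal_mult, one = Ord\<rparr>"

definition ray_class_group :: "'k::field_char_0 set \<Rightarrow> 'k set \<Rightarrow> ('k \<Rightarrow> real) set \<Rightarrow> 'k set set monoid" where
  "ray_class_group Ord m \<Sigma> = ideal_group Ord m Mod P_ray Ord m \<Sigma>"

definition ideal_class :: "'k::field_char_0 set \<Rightarrow> 'k set \<Rightarrow> ('k \<Rightarrow> real) set \<Rightarrow> 'k set \<Rightarrow> 'k set set" where
  "ideal_class Ord m \<Sigma> a = r_coset (ideal_group Ord m) (P_ray Ord m \<Sigma>) a"

definition is_ext_map ::
  "'k::field_char_0 set \<Rightarrow> 'k set \<Rightarrow> ('k \<Rightarrow> real) set \<Rightarrow> 'k set \<Rightarrow> 'k set \<Rightarrow> ('k \<Rightarrow> real) set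
   \<Rightarrow> ('k set set \<Rightarrow> 'k set set) \<Rightarrow> bool" where
  "is_ext_map Ord m \<Sigma> Ord' m' \<Sigma>' h \<longleftrightarrow>
     h \<in> hom (ray_class_group Ord m \<Sigma>) (ray_class_group Ord' m' \<Sigma>') \<and>
     (\<forall>a\<in>J_star Ord m. h (ideal_class Ord m \<Sigma> a) = ideal_class Ord' m' \<Sigma>' (ideal_mult a Ord'))"

end

(*
  Extension of ideals is multiplicative
  and carries the generators of P_{m,Sigma}(O) to generators of P_{m',Sigma'}(O'), so the map is a
  well defined homomorphism; it is unique and compatible with composition because the classes [a]
  exhaust the ray class group and (aO')O'' = aO''.

  Surjectivity: fix a nonzero integer N with N O' contained in m, and let a' lie in J*_{m'}(O').
  In the finite ring O'/NO', orthogonal idempotents turn a relation 1 = sum u_i v_i with u_i in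
  a'^-1 and v_i in a' into a single x in a'^-1 with xa' + NO' = O' and x = 1 modulo m'. Adding a
  large multiple of N makes x totally positive, so alpha = x + L lies in the ray and b = alpha a'
  is an integral ideal coprime to N. Such an ideal is the extension of its contraction b /\ O,
  which lies in J*_m(O), and [b] = [a'].
*)
theory Submission
  imports Defs "HOL-Computational_Algebra.Polynomial"
begin

section \<open>Products of ideals\<close>

lemma ideal_mult_mem: "a \<in> A \<Longrightarrow> b \<in> B \<Longrightarrow> a * b \<in> ideal_mult A B"
  unfolding ideal_mult_def
  by (rule CollectI, rule exI[of _ 1], rule exI[of _ "\<lambda>_. a"], rule exI[of _ "\<lambda>_. b"]) simp

lemma zero_in_ideal_mult: "0 \<in> ideal_mult A B"
  unfolding ideal_mult_def by (rule CollectI, rule exI[of _ 0]) simp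

lemma ideal_mult_add:
  assumes "x \<in> ideal_mult A B" "y \<in> ideal_mult A B"
  shows "x + y \<in> ideal_mult A B"
proof -
  obtain k :: nat and a b where x: "\<forall>i<k. a i \<in> A \<and> b i \<in> B" "x = (\<Sum>i<k. a i * b i)"
    using assms(1) unfolding ideal_mult_def by blast
  obtain l :: nat and a' b' where y: "\<forall>i<l. a' i \<in> A \<and> b' i \<in> B" "y = (\<Sum>i<l. a' i * b' i)"
    using assms(2) unfolding ideal_mult_def by blast
  define a2 where "a2 i = (if i < k then a i else a' (i - k))" for i
  define b2 where "b2 i = (if i < k then b i else b' (i - k))" for i
  have split: "(\<Sum>i<k + l. f i) = (\<Sum>i<k. f i) + (\<Sum>i<l. f (k + i))" for f :: "nat \<Rightarrow> 'a"
    by (induction l) (simp_all add: add_ac)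
  have "x + y = (\<Sum>i<k + l. a2 i * b2 i)"
    unfolding split using x y by (simp add: a2_def b2_def)
  moreover have "\<forall>i<k + l. a2 i \<in> A \<and> b2 i \<in> B" using x y by (auto simp: a2_def b2_def)
  ultimately show ?thesis unfolding ideal_mult_def by blast
qed

lemma ideal_mult_induct [consumes 1, case_names zero add mult]:
  assumes "x \<in> ideal_mult A B" "P 0" "\<And>x y. P x \<Longrightarrow> P y \<Longrightarrow> P (x + y)"
    "\<And>a b. a \<in> A \<Longrightarrow> b \<in> B \<Longrightarrow> P (a * b)"
  shows "P x"
proof -
  obtain k :: nat and a b where ab: "\<forall>i<k. a i \<in> A \<and> b i \<in> B" "x = (\<Sum>i<k. a i * b i)"
    using assms(1) unfolding ideal_mult_def by blast
  have "P (\<Sum>i<j. a i * b i)" if "j \<le> k" for j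
    using that by (induction j) (use ab assms(2-4) in auto)
  then show ?thesis using ab by simp
qed

lemma ideal_mult_subsetI:
  assumes "0 \<in> C" "\<And>x y. x \<in> C \<Longrightarrow> y \<in> C \<Longrightarrow> x + y \<in> C"
    "\<And>a b. a \<in> A \<Longrightarrow> b \<in> B \<Longrightarrow> a * b \<in> C"
  shows "ideal_mult A B \<subseteq> C"
  using assms by (auto elim!: ideal_mult_induct)

lemma ideal_mult_commute: "ideal_mult A B = ideal_mult B A"
proof -
  have "ideal_mult A B \<subseteq> ideal_mult B A" for A B :: "'k::field_char_0 set"
  proof (rule ideal_mult_subsetI)
    fix a b assume "a \<in> A" "b \<in> B"
    then show "a * b \<in> ideal_mult B A" using ideal_mult_mem[of b B a A] by (simp add: mult.commute)
  qed (auto intro: zero_in_ideal_mult ideal_mult_add)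
  then show ?thesis by blast
qed

lemma ideal_mult_assoc: "ideal_mult (ideal_mult A B) C = ideal_mult A (ideal_mult B C)"
proof -
  have *: "ideal_mult (ideal_mult A B) C \<subseteq> ideal_mult A (ideal_mult B C)"
    for A B C :: "'k::field_char_0 set"
  proof (rule ideal_mult_subsetI)
    fix x c assume "x \<in> ideal_mult A B" "c \<in> C"
    then show "x * c \<in> ideal_mult A (ideal_mult B C)"
      by (induction rule: ideal_mult_induct)
        (auto simp: distrib_right mult.assoc intro!: zero_in_ideal_mult ideal_mult_add ideal_mult_mem)
  qed (auto intro: zero_in_ideal_mult ideal_mult_add)
  have "ideal_mult A (ideal_mult B C) \<subseteq> ideal_mult C (ideal_mult B A)"
    using *[of C B A] by (simp add: ideal_mult_commute)
  also have "\<dots> = ideal_mult (ideal_mult A B) C" by (simp add: ideal_mult_commute)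
  finally show ?thesis using * by blast
qed

lemma ideal_mult_left_commute: "ideal_mult A (ideal_mult B C) = ideal_mult B (ideal_mult A C)"
  by (metis ideal_mult_assoc ideal_mult_commute)

lemma ideal_mult_mult_mult:
  "ideal_mult (ideal_mult A B) (ideal_mult C D) = ideal_mult (ideal_mult A C) (ideal_mult B D)"
  by (simp add: ideal_mult_assoc ideal_mult_left_commute[of B C])

definition smul :: "'k::field_char_0 \<Rightarrow> 'k set \<Rightarrow> 'k set" where
  "smul c A = (\<lambda>x. c * x) ` A"

lemma smul_mem: "x \<in> M \<Longrightarrow> c * x \<in> smul c M"
  unfolding smul_def by (rule imageI)

lemma smul_smul: "smul a (smul b M) = smul (a * b) M"
  unfolding smul_def by (auto simp: image_image mult.assoc)

lemma smul_one [simp]: "smul 1 M = M"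
  unfolding smul_def by simp

lemma ideal_mult_smul_left: "ideal_mult (smul c A) B = smul c (ideal_mult A B)"
proof
  show "ideal_mult (smul c A) B \<subseteq> smul c (ideal_mult A B)"
    by (rule ideal_mult_subsetI)
      (auto simp: smul_def distrib_left[symmetric] mult.assoc
        intro!: image_eqI[of 0 _ 0] imageI zero_in_ideal_mult ideal_mult_add ideal_mult_mem)
  show "smul c (ideal_mult A B) \<subseteq> ideal_mult (smul c A) B"
  proof
    fix y assume "y \<in> smul c (ideal_mult A B)"
    then obtain x where x: "x \<in> ideal_mult A B" "y = c * x" unfolding smul_def by auto
    from x(1) have "c * x \<in> ideal_mult (smul c A) B"
      by (induction rule: ideal_mult_induct)
        (auto simp: distrib_left mult.assoc[symmetric] smul_def
          intro!: zero_in_ideal_mult ideal_mult_add ideal_mult_mem)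
    then show "y \<in> ideal_mult (smul c A) B" using x by simp
  qed
qed

lemma ideal_mult_smul_right: "ideal_mult A (smul c B) = smul c (ideal_mult A B)"
  by (simp add: ideal_mult_commute[of A] ideal_mult_smul_left)

lemma subring_zero: "is_subring R \<Longrightarrow> 0 \<in> R"
  unfolding is_subring_def by (metis diff_self)

lemma subring_one: "is_subring R \<Longrightarrow> 1 \<in> R"
  unfolding is_subring_def by blast

lemma subring_add: "is_subring R \<Longrightarrow> x \<in> R \<Longrightarrow> y \<in> R \<Longrightarrow> x + y \<in> R"
  unfolding is_subring_def by blast

lemma subring_diff: "is_subring R \<Longrightarrow> x \<in> R \<Longrightarrow> y \<in> R \<Longrightarrow> x - y \<in> R"
  unfolding is_subring_def by blast

lemma subring_mult: "is_subring R \<Longrightarrow> x \<in> R \<Longrightarrow> y \<in> R \<Longrightarrow> x * y \<in> R"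
  unfolding is_subring_def by blast

lemma subring_of_int:
  assumes R: "is_subring R"
  shows "of_int z \<in> R"
proof -
  have "of_nat n \<in> R" for n
    by (induction n) (auto intro: subring_zero subring_add subring_one R)
  then show ?thesis
    using subring_diff[OF R subring_zero[OF R]] by (cases z rule: int_cases) (auto simp del: of_nat_Suc)
qed

lemma subring_power: "is_subring R \<Longrightarrow> x \<in> R \<Longrightarrow> x ^ n \<in> R"
  by (induction n) (auto intro: subring_one subring_mult)

lemma subring_sum: "is_subring R \<Longrightarrow> (\<And>i. i \<in> I \<Longrightarrow> f i \<in> R) \<Longrightarrow> sum f I \<in> R"
  by (induction I rule: infinite_finite_induct) (auto intro: subring_zero subring_add)

lemma submodule_zero: "O_submodule R M \<Longrightarrow> 0 \<in> M"
  unfolding O_submodule_def by blast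

lemma submodule_add: "O_submodule R M \<Longrightarrow> x \<in> M \<Longrightarrow> y \<in> M \<Longrightarrow> x + y \<in> M"
  unfolding O_submodule_def by blast

lemma submodule_diff: "O_submodule R M \<Longrightarrow> x \<in> M \<Longrightarrow> y \<in> M \<Longrightarrow> x - y \<in> M"
  unfolding O_submodule_def by blast

lemma submodule_uminus: "O_submodule R M \<Longrightarrow> x \<in> M \<Longrightarrow> - x \<in> M"
  using submodule_diff[of R M 0 x] submodule_zero[of R M] by simp

lemma submodule_mult_left: "O_submodule R M \<Longrightarrow> r \<in> R \<Longrightarrow> x \<in> M \<Longrightarrow> r * x \<in> M"
  unfolding O_submodule_def by blast

lemma submodule_mult_right: "O_submodule R M \<Longrightarrow> r \<in> R \<Longrightarrow> x \<in> M \<Longrightarrow> x * r \<in> M"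
  using submodule_mult_left[of R M r x] by (simp add: mult.commute)

lemma submodule_sum: "O_submodule R M \<Longrightarrow> (\<And>i. i \<in> I \<Longrightarrow> f i \<in> M) \<Longrightarrow> sum f I \<in> M"
  by (induction I rule: infinite_finite_induct) (simp_all add: submodule_zero submodule_add)

lemma subring_submodule: "is_subring R \<Longrightarrow> O_submodule R R"
  unfolding O_submodule_def by (simp add: subring_zero subring_add subring_diff subring_mult)

lemma submodule_subring_mono: "O_submodule R' M \<Longrightarrow> R \<subseteq> R' \<Longrightarrow> O_submodule R M"
  unfolding O_submodule_def by (meson subsetD)

lemma submodule_Int: "O_submodule R A \<Longrightarrow> O_submodule R B \<Longrightarrow> O_submodule R (A \<inter> B)"
  unfolding O_submodule_def by blast

lemma smul_submodule: "O_submodule R M \<Longrightarrow> O_submodule R (smul c M)"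
  unfolding O_submodule_def smul_def
  by (auto simp: distrib_left[symmetric] right_diff_distrib[symmetric] mult.left_commute[of _ c]
      intro!: imageI)

lemma ideal_mult_submodule:
  assumes "O_submodule R B"
  shows "O_submodule R (ideal_mult A B)"
  unfolding O_submodule_def
proof (intro conjI ballI)
  show "0 \<in> ideal_mult A B" by (rule zero_in_ideal_mult)
  fix x y assume x: "x \<in> ideal_mult A B" and y: "y \<in> ideal_mult A B"
  show "x + y \<in> ideal_mult A B" using x y by (rule ideal_mult_add)
  from y have "- y \<in> ideal_mult A B"
  proof (induction rule: ideal_mult_induct)
    case (add x y)
    then show ?case using ideal_mult_add[of "- x" A B "- y"] by simp
  next
    case (mult a b)
    then show ?case using ideal_mult_mem[of a A "- b" B] submodule_uminus[OF assms] by simp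
  qed (simp add: zero_in_ideal_mult)
  then show "x - y \<in> ideal_mult A B" using ideal_mult_add[OF x] by (metis diff_conv_add_uminus)
next
  fix r x assume r: "r \<in> R" and x: "x \<in> ideal_mult A B"
  from x show "r * x \<in> ideal_mult A B"
  proof (induction rule: ideal_mult_induct)
    case (mult a b)
    then show ?case
      using ideal_mult_mem[of a A "r * b" B] submodule_mult_left[OF assms r] by (simp add: mult.left_commute)
  qed (simp_all add: zero_in_ideal_mult ideal_mult_add distrib_left)
qed

lemma ideal_mult_subring_right:
  assumes "is_subring R" "O_submodule R M"
  shows "ideal_mult M R = M"
proof
  show "ideal_mult M R \<subseteq> M"
    by (rule ideal_mult_subsetI)
      (auto intro: submodule_zero[OF assms(2)] submodule_add[OF assms(2)] submodule_mult_right[OF assms(2)])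
  show "M \<subseteq> ideal_mult M R"
    using ideal_mult_mem[of _ M 1 R] subring_one[OF assms(1)] by auto
qed

lemma ideal_mult_subring_left: "is_subring R \<Longrightarrow> O_submodule R M \<Longrightarrow> ideal_mult R M = M"
  using ideal_mult_subring_right[of R M] by (simp add: ideal_mult_commute)

lemma ideal_mult_subring_subset:
  assumes "is_subring R" "is_subring R'" "R \<subseteq> R'"
  shows "ideal_mult R R' = R'"
  by (rule ideal_mult_subring_left[OF assms(1) submodule_subring_mono[OF subring_submodule[OF assms(2)] assms(3)]])

lemma ideal_mult_subring_self: "is_subring R \<Longrightarrow> ideal_mult R R = R"
  using ideal_mult_subring_subset by blast

lemma ideal_mult_principal:
  assumes "is_subring R" "O_submodule R M"
  shows "ideal_mult (principal c R) M = smul c M"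
proof -
  have "principal c R = smul c R" unfolding principal_def smul_def by auto
  then show ?thesis using assms by (simp add: ideal_mult_smul_left ideal_mult_subring_left)
qed

lemma ideal_add_eq_iff:
  assumes "is_subring R" "integral_ideal R A" "integral_ideal R m"
  shows "ideal_add A m = R \<longleftrightarrow> (\<exists>a\<in>A. \<exists>y\<in>m. a + y = 1)"
proof
  assume "ideal_add A m = R"
  then have "1 \<in> ideal_add A m" using subring_one[OF assms(1)] by simp
  then show "\<exists>a\<in>A. \<exists>y\<in>m. a + y = 1" unfolding ideal_add_def by force
next
  assume "\<exists>a\<in>A. \<exists>y\<in>m. a + y = 1"
  then obtain a y where ay: "a \<in> A" "y \<in> m" "a + y = 1" by blast
  show "ideal_add A m = R"
  proof
    show "ideal_add A m \<subseteq> R"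
      using assms unfolding ideal_add_def integral_ideal_def by (auto intro: subring_add)
    show "R \<subseteq> ideal_add A m"
    proof
      fix z assume "z \<in> R"
      then have "z * a \<in> A" "z * y \<in> m"
        using ay assms(2,3) unfolding integral_ideal_def by (auto intro: submodule_mult_left)
      moreover have "z = z * a + z * y" using ay(3) by (metis distrib_left mult_1_right)
      ultimately show "z \<in> ideal_add A m" unfolding ideal_add_def by blast
    qed
  qed
qed

section \<open>Invertible ideals coprime to the modulus\<close>

lemma fractional_ideal_submodule: "fractional_ideal R a \<Longrightarrow> O_submodule R a"
  unfolding fractional_ideal_def by blast

lemma fractional_ideal_nonzero: "fractional_ideal R a \<Longrightarrow> \<exists>x\<in>a. x \<noteq> 0"
  unfolding fractional_ideal_def using submodule_zero by blast

lemma invertible_ideal_fractional: "invertible_ideal R a \<Longrightarrow> fractional_ideal R a"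
  unfolding invertible_ideal_def by blast

lemma ideal_colon_eq_ideal_mult:
  assumes R: "is_subring R" and A: "O_submodule R A" and inv: "ideal_mult B Bi = R"
  shows "ideal_colon A B = ideal_mult A Bi"
proof
  show "ideal_colon A B \<subseteq> ideal_mult A Bi"
  proof
    fix x assume x: "x \<in> ideal_colon A B"
    have "1 \<in> ideal_mult B Bi" using inv subring_one[OF R] by simp
    then have "x * 1 \<in> ideal_mult A Bi"
    proof (induction rule: ideal_mult_induct)
      case (mult p q)
      then have "x * p \<in> A" using x unfolding ideal_colon_def by blast
      then show ?case using ideal_mult_mem[of "x * p" A q Bi] mult by (simp add: mult.assoc)
    qed (simp_all add: zero_in_ideal_mult ideal_mult_add distrib_left)
    then show "x \<in> ideal_mult A Bi" by simp
  qed
  show "ideal_mult A Bi \<subseteq> ideal_colon A B"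
  proof
    fix z assume z: "z \<in> ideal_mult A Bi"
    have "z * b \<in> A" if b: "b \<in> B" for b
      using z
    proof (induction rule: ideal_mult_induct)
      case (mult p q)
      have "b * q \<in> R" using ideal_mult_mem[OF b mult(2)] inv by simp
      then show ?case using submodule_mult_right[OF A _ mult(1), of "b * q"] by (simp add: ac_simps)
    qed (simp_all add: submodule_zero[OF A] submodule_add[OF A] distrib_right)
    then show "z \<in> ideal_colon A B" unfolding ideal_colon_def by blast
  qed
qed

lemma fractional_ideal_mult:
  assumes R: "is_subring R" and a: "fractional_ideal R a" and b: "fractional_ideal R b"
  shows "fractional_ideal R (ideal_mult a b)"
proof -
  obtain x y where xy: "x \<in> a" "x \<noteq> 0" "y \<in> b" "y \<noteq> 0"
    using fractional_ideal_nonzero[OF a] fractional_ideal_nonzero[OF b] by blast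
  then have "x * y \<in> ideal_mult a b" "x * y \<noteq> 0" by (simp_all add: ideal_mult_mem)
  then have nz: "ideal_mult a b \<noteq> {0}" by blast
  obtain d where d: "d \<in> R" "d \<noteq> 0" "\<forall>x\<in>a. d * x \<in> R"
    using a unfolding fractional_ideal_def by blast
  obtain e where e: "e \<in> R" "e \<noteq> 0" "\<forall>x\<in>b. e * x \<in> R"
    using b unfolding fractional_ideal_def by blast
  have de: "(d * e) * z \<in> R" if "z \<in> ideal_mult a b" for z
    using that
  proof (induction rule: ideal_mult_induct)
    case (mult p q)
    have "(d * p) * (e * q) \<in> R" using mult d(3) e(3) subring_mult[OF R] by blast
    then show ?case by (simp add: ac_simps)
  qed (simp_all add: subring_zero[OF R] subring_add[OF R] distrib_left)
  have "d * e \<in> R" "d * e \<noteq> 0" using d e subring_mult[OF R] by auto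
  then show ?thesis
    unfolding fractional_ideal_def
    by (intro conjI ideal_mult_submodule[OF fractional_ideal_submodule[OF b]] nz bexI[of _ "d * e"] ballI de)
qed

lemma invertible_ideal_mult:
  assumes R: "is_subring R" and a: "invertible_ideal R a" and b: "invertible_ideal R b"
  shows "invertible_ideal R (ideal_mult a b)"
proof -
  obtain N where N: "fractional_ideal R N" "ideal_mult a N = R"
    using a unfolding invertible_ideal_def by blast
  obtain N' where N': "fractional_ideal R N'" "ideal_mult b N' = R"
    using b unfolding invertible_ideal_def by blast
  have "ideal_mult (ideal_mult a b) (ideal_mult N N') = R"
    using ideal_mult_mult_mult[of a b N N'] N N' ideal_mult_subring_self[OF R] by simp
  then show ?thesis
    unfolding invertible_ideal_def
    using fractional_ideal_mult[OF R] invertible_ideal_fractional[OF a] invertible_ideal_fractional[OF b]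
      N(1) N'(1) by blast
qed

lemma integral_ideal_mult:
  assumes R: "is_subring R" and a: "integral_ideal R a" and b: "integral_ideal R b"
  shows "integral_ideal R (ideal_mult a b)"
  unfolding integral_ideal_def
proof
  show "O_submodule R (ideal_mult a b)"
    using b unfolding integral_ideal_def by (blast intro: ideal_mult_submodule)
  show "ideal_mult a b \<subseteq> R"
    by (rule ideal_mult_subsetI)
      (use a b R in \<open>auto simp: integral_ideal_def intro: subring_zero subring_add subring_mult\<close>)
qed

lemma coprime_ideal_mult:
  assumes R: "is_subring R" and a: "integral_ideal R a" and b: "integral_ideal R b"
    and m: "integral_ideal R m" and ca: "ideal_add a m = R" and cb: "ideal_add b m = R"
  shows "ideal_add (ideal_mult a b) m = R"
proof -
  obtain x y where xy: "x \<in> a" "y \<in> m" "x + y = 1" using ideal_add_eq_iff[OF R a m] ca by blast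
  obtain x' y' where xy': "x' \<in> b" "y' \<in> m" "x' + y' = 1" using ideal_add_eq_iff[OF R b m] cb by blast
  have "(x + y) * (x' + y') = 1" using xy xy' by simp
  then have "x * x' + (x * y' + y * (x' + y')) = 1" by (simp add: algebra_simps)
  moreover have "x * x' \<in> ideal_mult a b" using xy xy' ideal_mult_mem by blast
  moreover have "x * y' + y * (x' + y') \<in> m"
  proof -
    have m_sub: "O_submodule R m" and ab: "a \<subseteq> R" "b \<subseteq> R"
      using a b m unfolding integral_ideal_def by auto
    have "x' + y' \<in> R" using xy'(3) subring_one[OF R] by simp
    then show ?thesis using xy xy' ab
      by (intro submodule_add[OF m_sub] submodule_mult_left[OF m_sub] submodule_mult_right[OF m_sub]) auto
  qed
  ultimately show ?thesis using ideal_add_eq_iff[OF R integral_ideal_mult[OF R a b] m] by blast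
qed

lemma fractional_ideal_extend:
  assumes R': "is_subring R'" and sub: "R \<subseteq> R'" and a: "fractional_ideal R a"
  shows "fractional_ideal R' (ideal_mult a R')"
proof -
  obtain x where x: "x \<in> a" "x \<noteq> 0" using fractional_ideal_nonzero[OF a] by blast
  then have "x * 1 \<in> ideal_mult a R'" by (intro ideal_mult_mem subring_one[OF R'])
  then have nz: "ideal_mult a R' \<noteq> {0}" using x by auto
  obtain d where d: "d \<in> R" "d \<noteq> 0" "\<forall>x\<in>a. d * x \<in> R"
    using a unfolding fractional_ideal_def by blast
  have dz: "d * z \<in> R'" if "z \<in> ideal_mult a R'" for z
    using that
  proof (induction rule: ideal_mult_induct)
    case (mult p q)
    then have "(d * p) * q \<in> R'" using d sub subring_mult[OF R'] by blast
    then show ?case by (simp add: mult.assoc)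
  qed (simp_all add: subring_zero[OF R'] subring_add[OF R'] distrib_left)
  show ?thesis
    unfolding fractional_ideal_def
    using ideal_mult_submodule[OF subring_submodule[OF R']] nz d sub dz by blast
qed

lemma invertible_ideal_extend:
  assumes R: "is_subring R" and R': "is_subring R'" and sub: "R \<subseteq> R'"
    and a: "invertible_ideal R a"
  shows "invertible_ideal R' (ideal_mult a R')"
proof -
  obtain N where N: "fractional_ideal R N" "ideal_mult a N = R"
    using a unfolding invertible_ideal_def by blast
  have "ideal_mult (ideal_mult a R') (ideal_mult N R') = ideal_mult (ideal_mult a N) (ideal_mult R' R')"
    by (rule ideal_mult_mult_mult)
  also have "\<dots> = R'"
    using N(2) ideal_mult_subring_subset[OF R R' sub] ideal_mult_subring_self[OF R'] by simp
  finally show ?thesis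
    unfolding invertible_ideal_def
    using fractional_ideal_extend[OF R' sub] invertible_ideal_fractional[OF a] N(1) by blast
qed

lemma integral_ideal_extend:
  assumes R': "is_subring R'" and sub: "R \<subseteq> R'" and a: "integral_ideal R a"
  shows "integral_ideal R' (ideal_mult a R')"
  unfolding integral_ideal_def
proof
  show "O_submodule R' (ideal_mult a R')" by (rule ideal_mult_submodule[OF subring_submodule[OF R']])
  show "ideal_mult a R' \<subseteq> R'"
    by (rule ideal_mult_subsetI)
      (use a sub R' in \<open>auto simp: integral_ideal_def intro: subring_zero subring_add subring_mult\<close>)
qed

lemma coprime_ideal_extend:
  assumes R: "is_subring R" and R': "is_subring R'" and sub: "R \<subseteq> R'"
    and a: "integral_ideal R a" and m: "integral_ideal R m" and m': "integral_ideal R' m'"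
    and mm: "ideal_mult m R' \<subseteq> m'" and cop: "ideal_add a m = R"
  shows "ideal_add (ideal_mult a R') m' = R'"
proof -
  obtain x y where xy: "x \<in> a" "y \<in> m" "x + y = 1" using ideal_add_eq_iff[OF R a m] cop by blast
  have "x * 1 \<in> ideal_mult a R'" "y * 1 \<in> ideal_mult m R'"
    using xy subring_one[OF R'] ideal_mult_mem by blast+
  then have "x \<in> ideal_mult a R'" "y \<in> m'" using mm by auto
  then show ?thesis
    using xy ideal_add_eq_iff[OF R' integral_ideal_extend[OF R' sub a] m'] by blast
qed

lemma ideal_colon_submodule: "is_subring R \<Longrightarrow> O_submodule R (ideal_colon R a)"
  unfolding O_submodule_def ideal_colon_def
  by (auto simp: subring_zero distrib_right left_diff_distrib mult.assoc intro: subring_add subring_diff subring_mult)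

lemma invertible_ideal_if_one_in_mult_colon:
  assumes R: "is_subring R" and a: "integral_ideal R a" and d: "d \<in> a" "d \<noteq> 0"
    and one: "1 \<in> ideal_mult a (ideal_colon R a)"
  shows "invertible_ideal R a"
proof -
  have a_sub: "O_submodule R a" "a \<subseteq> R" using a unfolding integral_ideal_def by auto
  have C: "O_submodule R (ideal_colon R a)" by (rule ideal_colon_submodule[OF R])
  have "1 \<in> ideal_colon R a" using a_sub(2) unfolding ideal_colon_def by auto
  then have "ideal_colon R a \<noteq> {0}" by auto
  moreover have "\<forall>x\<in>ideal_colon R a. d * x \<in> R" using d(1) unfolding ideal_colon_def by (auto simp: mult.commute)
  ultimately have "fractional_ideal R (ideal_colon R a)"
    unfolding fractional_ideal_def using C d a_sub(2) by blast
  moreover have "fractional_ideal R a"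
    unfolding fractional_ideal_def using a_sub d subring_one[OF R] by (intro conjI bexI[of _ 1]) auto
  moreover have "ideal_mult a (ideal_colon R a) = R"
  proof
    show "ideal_mult a (ideal_colon R a) \<subseteq> R"
      by (rule ideal_mult_subsetI)
        (auto simp: ideal_colon_def mult.commute intro: subring_zero[OF R] subring_add[OF R])
    show "R \<subseteq> ideal_mult a (ideal_colon R a)"
      using submodule_mult_left[OF ideal_mult_submodule[OF C] _ one] by force
  qed
  ultimately show ?thesis unfolding invertible_ideal_def by blast
qed

lemma J_starE:
  assumes R: "is_subring R" and a: "a \<in> J_star R m"
  obtains a1 b1 Bi where "integral_ideal R a1" "integral_ideal R b1" "invertible_ideal R b1"
    "ideal_add a1 m = R" "ideal_add b1 m = R" "fractional_ideal R Bi" "ideal_mult b1 Bi = R"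
    "a = ideal_mult a1 Bi"
proof -
  obtain a1 b1 where ab: "integral_ideal R a1" "integral_ideal R b1" "invertible_ideal R b1"
    "ideal_add a1 m = R" "ideal_add b1 m = R" "a = ideal_colon a1 b1"
    using a unfolding J_star_def coprime_to_def by blast
  obtain Bi where Bi: "fractional_ideal R Bi" "ideal_mult b1 Bi = R"
    using ab(3) unfolding invertible_ideal_def by blast
  have "a = ideal_mult a1 Bi"
    using ab(1,6) ideal_colon_eq_ideal_mult[OF R _ Bi(2)] unfolding integral_ideal_def by blast
  then show ?thesis using that ab Bi by blast
qed

lemma J_starI:
  assumes R: "is_subring R" and "integral_ideal R a1" "integral_ideal R b1" "invertible_ideal R b1"
    "ideal_add a1 m = R" "ideal_add b1 m = R" "ideal_mult b1 Bi = R" "a = ideal_mult a1 Bi"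
    "invertible_ideal R a"
  shows "a \<in> J_star R m"
  using assms ideal_colon_eq_ideal_mult[OF R, of a1 b1 Bi]
  unfolding J_star_def coprime_to_def integral_ideal_def by blast

lemma J_star_submodule: "a \<in> J_star R m \<Longrightarrow> O_submodule R a"
  unfolding J_star_def using invertible_ideal_fractional fractional_ideal_submodule by blast

lemma J_star_mult:
  assumes R: "is_subring R" and m: "integral_ideal R m" and a: "a \<in> J_star R m" and b: "b \<in> J_star R m"
  shows "ideal_mult a b \<in> J_star R m"
proof -
  obtain a1 b1 N where ab: "integral_ideal R a1" "integral_ideal R b1" "invertible_ideal R b1"
    "ideal_add a1 m = R" "ideal_add b1 m = R" "fractional_ideal R N" "ideal_mult b1 N = R"
    "a = ideal_mult a1 N"
    using J_starE[OF R a] .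
  obtain a2 b2 N2 where ab2: "integral_ideal R a2" "integral_ideal R b2" "invertible_ideal R b2"
    "ideal_add a2 m = R" "ideal_add b2 m = R" "fractional_ideal R N2" "ideal_mult b2 N2 = R"
    "b = ideal_mult a2 N2"
    using J_starE[OF R b] .
  have "ideal_mult (ideal_mult b1 b2) (ideal_mult N N2) = R"
    using ideal_mult_mult_mult[of b1 b2 N N2] ab(7) ab2(7) ideal_mult_subring_self[OF R] by simp
  moreover have "ideal_mult a b = ideal_mult (ideal_mult a1 a2) (ideal_mult N N2)"
    unfolding ab(8) ab2(8) by (rule ideal_mult_mult_mult)
  moreover have "invertible_ideal R (ideal_mult a b)"
    using invertible_ideal_mult[OF R] a b unfolding J_star_def by blast
  ultimately show ?thesis
    using J_starI[OF R integral_ideal_mult[OF R ab(1) ab2(1)] integral_ideal_mult[OF R ab(2) ab2(2)]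
        invertible_ideal_mult[OF R ab(3) ab2(3)] coprime_ideal_mult[OF R ab(1) ab2(1) m ab(4) ab2(4)]
        coprime_ideal_mult[OF R ab(2) ab2(2) m ab(5) ab2(5)]]
    by blast
qed

lemma J_star_extend:
  assumes R: "is_subring R" and R': "is_subring R'" and sub: "R \<subseteq> R'"
    and m: "integral_ideal R m" and m': "integral_ideal R' m'"
    and mm: "ideal_mult m R' \<subseteq> m'" and a: "a \<in> J_star R m"
  shows "ideal_mult a R' \<in> J_star R' m'"
proof -
  obtain a1 b1 N where ab: "integral_ideal R a1" "integral_ideal R b1" "invertible_ideal R b1"
    "ideal_add a1 m = R" "ideal_add b1 m = R" "fractional_ideal R N" "ideal_mult b1 N = R"
    "a = ideal_mult a1 N"
    using J_starE[OF R a] .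
  have R'R': "ideal_mult R' R' = R'" by (rule ideal_mult_subring_self[OF R'])
  have "ideal_mult (ideal_mult b1 R') (ideal_mult N R') = R'"
    using ideal_mult_mult_mult[of b1 R' N R'] ab(7) R'R' ideal_mult_subring_subset[OF R R' sub] by simp
  moreover have "ideal_mult a R' = ideal_mult (ideal_mult a1 R') (ideal_mult N R')"
    using ideal_mult_mult_mult[of a1 R' N R'] ab(8) R'R' by simp
  moreover have "invertible_ideal R' (ideal_mult a R')"
    using invertible_ideal_extend[OF R R' sub] a unfolding J_star_def by blast
  ultimately show ?thesis
    using J_starI[OF R' integral_ideal_extend[OF R' sub ab(1)] integral_ideal_extend[OF R' sub ab(2)]
        invertible_ideal_extend[OF R R' sub ab(3)] coprime_ideal_extend[OF R R' sub ab(1) m m' mm ab(4)]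
        coprime_ideal_extend[OF R R' sub ab(2) m m' mm ab(5)]]
    by blast
qed

section \<open>Ray classes\<close>

lemma real_embedding_zero: "real_embedding \<rho> \<Longrightarrow> \<rho> 0 = 0"
  unfolding real_embedding_def by (metis add_0 add_cancel_right_right)

lemma real_embedding_one: "real_embedding \<rho> \<Longrightarrow> \<rho> 1 = 1"
  unfolding real_embedding_def by blast

lemma real_embedding_add: "real_embedding \<rho> \<Longrightarrow> \<rho> (x + y) = \<rho> x + \<rho> y"
  unfolding real_embedding_def by blast

lemma real_embedding_mult: "real_embedding \<rho> \<Longrightarrow> \<rho> (x * y) = \<rho> x * \<rho> y"
  unfolding real_embedding_def by blast

lemma real_embedding_uminus: "real_embedding \<rho> \<Longrightarrow> \<rho> (- x) = - \<rho> x"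
  using real_embedding_add[of \<rho> x "- x"] real_embedding_zero[of \<rho>] by simp

lemma real_embedding_inverse: "real_embedding \<rho> \<Longrightarrow> x \<noteq> 0 \<Longrightarrow> \<rho> (inverse x) = inverse (\<rho> x)"
  using real_embedding_mult[of \<rho> x "inverse x"] real_embedding_one[of \<rho>] by (simp add: inverse_unique)

lemma real_embedding_of_int:
  assumes \<rho>: "real_embedding \<rho>"
  shows "\<rho> (of_int z) = of_int z"
proof -
  have "\<rho> (of_nat n) = of_nat n" for n
    by (induction n) (simp_all add: real_embedding_zero[OF \<rho>] real_embedding_add[OF \<rho>] real_embedding_one[OF \<rho>])
  then show ?thesis by (cases z rule: int_cases) (simp_all add: real_embedding_uminus[OF \<rho>] del: of_nat_Suc)
qed

lemma real_embedding_of_rat: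
  assumes \<rho>: "real_embedding \<rho>"
  shows "\<rho> (of_rat q) = of_rat q"
proof -
  obtain p d where pd: "quotient_of q = (p, d)" by (cases "quotient_of q")
  then have "d \<noteq> 0" "q = of_int p / of_int d" by (auto dest: quotient_of_denom_pos quotient_of_div)
  then show ?thesis
    by (simp add: of_rat_divide of_rat_mult of_rat_inverse divide_inverse real_embedding_mult[OF \<rho>]
        real_embedding_inverse[OF \<rho>] real_embedding_of_int[OF \<rho>])
qed

lemma real_embedding_sum: "real_embedding \<rho> \<Longrightarrow> \<rho> (sum f A) = (\<Sum>i\<in>A. \<rho> (f i))"
  by (induction A rule: infinite_finite_induct) (simp_all add: real_embedding_zero real_embedding_add)

lemma real_embedding_power: "real_embedding \<rho> \<Longrightarrow> \<rho> (x ^ n) = \<rho> x ^ n"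
  by (induction n) (simp_all add: real_embedding_one real_embedding_mult)

definition ray_elements :: "'k::field_char_0 set \<Rightarrow> 'k set \<Rightarrow> ('k \<Rightarrow> real) set \<Rightarrow> 'k set" where
  "ray_elements R m \<Sigma> = {\<alpha>. \<alpha> \<noteq> 0 \<and> (\<exists>u\<in>m. \<exists>t\<in>S_m R m. t \<noteq> 0 \<and> \<alpha> - 1 = u / t) \<and> (\<forall>\<rho>\<in>\<Sigma>. \<rho> \<alpha> > 0)}"

locale ray_modulus =
  fixes R m :: "'k::field_char_0 set" and \<Sigma> :: "('k \<Rightarrow> real) set"
  assumes subring: "is_subring R" and modulus: "integral_ideal R m"
    and embeddings: "\<forall>\<rho>\<in>\<Sigma>. real_embedding \<rho>"
begin

lemma modulus_submodule: "O_submodule R m" and modulus_subset: "m \<subseteq> R"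
  using modulus unfolding integral_ideal_def by auto

lemma S_m_iff: "s \<in> S_m R m \<longleftrightarrow> s \<in> R \<and> (\<exists>c\<in>R. \<exists>y\<in>m. s * c + y = 1)"
proof (cases "s \<in> R")
  case True
  have "principal s R = smul s R" unfolding principal_def smul_def by auto
  then have "integral_ideal R (principal s R)"
    unfolding integral_ideal_def using smul_submodule[OF subring_submodule[OF subring]] True
    by (auto simp: smul_def intro: subring_mult[OF subring])
  then show ?thesis
    using ideal_add_eq_iff[OF subring _ modulus] True unfolding S_m_def principal_def by blast
qed (simp add: S_m_def)

lemma S_m_subset: "s \<in> S_m R m \<Longrightarrow> s \<in> R"
  using S_m_iff by blast

lemma one_in_S_m: "1 \<in> S_m R m"
  unfolding S_m_iff using subring_one[OF subring] submodule_zero[OF modulus_submodule]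
  by (intro conjI bexI[of _ 1] bexI[of _ 0]) auto

lemma S_m_mult:
  assumes "s \<in> S_m R m" "t \<in> S_m R m"
  shows "s * t \<in> S_m R m"
proof -
  obtain c y where c: "c \<in> R" "y \<in> m" "s * c + y = 1" using assms(1) S_m_iff by blast
  obtain d z where d: "d \<in> R" "z \<in> m" "t * d + z = 1" using assms(2) S_m_iff by blast
  have st: "s \<in> R" "t \<in> R" using assms S_m_subset by auto
  have "(s * c + y) * (t * d + z) = 1" using c d by simp
  then have "(s * t) * (c * d) + (s * c * z + y * (t * d + z)) = 1" by (simp add: algebra_simps)
  moreover have "s * c * z + y * (t * d + z) \<in> m"
    using c d st modulus_subset
    by (intro submodule_add[OF modulus_submodule] submodule_mult_left[OF modulus_submodule]
        submodule_mult_right[OF modulus_submodule] subring_mult[OF subring] subring_add[OF subring]) auto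
  moreover have "c * d \<in> R" "s * t \<in> R" using c d st subring_mult[OF subring] by auto
  ultimately show ?thesis unfolding S_m_iff by blast
qed

lemma mem_localized_modulus_iff:
  "x \<in> ideal_mult m (localize R (S_m R m)) \<longleftrightarrow> (\<exists>u\<in>m. \<exists>t\<in>S_m R m. t \<noteq> 0 \<and> x = u / t)"
  (is "_ \<longleftrightarrow> ?frac x")
proof
  assume "?frac x"
  then obtain u t where ut: "u \<in> m" "t \<in> S_m R m" "x = u / t" by blast
  have "1 / t \<in> localize R (S_m R m)" unfolding localize_def using ut subring_one[OF subring] by blast
  then show "x \<in> ideal_mult m (localize R (S_m R m))" using ideal_mult_mem[OF ut(1)] ut(3) by fastforce
next
  assume "x \<in> ideal_mult m (localize R (S_m R m))"
  then show "?frac x"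
  proof (induction rule: ideal_mult_induct)
    case zero
    show ?case using submodule_zero[OF modulus_submodule] one_in_S_m by (intro bexI[of _ 0] bexI[of _ 1]) auto
  next
    case (add x y)
    then obtain u t u' t' where h: "u \<in> m" "t \<in> S_m R m" "t \<noteq> 0" "x = u / t"
      "u' \<in> m" "t' \<in> S_m R m" "t' \<noteq> 0" "y = u' / t'"
      by blast
    have "x + y = (u * t' + u' * t) / (t * t')" using h by (simp add: field_simps)
    moreover have "u * t' + u' * t \<in> m"
      using h S_m_subset by (intro submodule_add[OF modulus_submodule] submodule_mult_right[OF modulus_submodule]) auto
    moreover have "t * t' \<in> S_m R m" "t * t' \<noteq> 0" using h S_m_mult by auto
    ultimately show ?case by blast
  next
    case (mult a b)
    then obtain z s where zs: "z \<in> R" "s \<in> S_m R m" "b = z / s" unfolding localize_def by blast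
    show ?case
    proof (cases "s = 0")
      case True
      then show ?thesis
        using submodule_zero[OF modulus_submodule] one_in_S_m zs by (intro bexI[of _ 0] bexI[of _ 1]) auto
    next
      case False
      then show ?thesis
        using zs mult submodule_mult_right[OF modulus_submodule, of z a] by (intro bexI[of _ "a * z"] bexI[of _ s]) auto
    qed
  qed
qed

lemma P_ray_eq_image: "P_ray R m \<Sigma> = (\<lambda>\<alpha>. principal \<alpha> R) ` ray_elements R m \<Sigma>"
  unfolding P_ray_def ray_elements_def mem_localized_modulus_iff by (rule setcompr_eq_image)

lemma ray_elements_one: "1 \<in> ray_elements R m \<Sigma>"
  unfolding ray_elements_def
  using submodule_zero[OF modulus_submodule] one_in_S_m embeddings
  by (intro CollectI conjI bexI[of _ 0] bexI[of _ 1] ballI) (auto simp: real_embedding_one)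

lemma ray_elements_mult:
  assumes "\<alpha> \<in> ray_elements R m \<Sigma>" "\<beta> \<in> ray_elements R m \<Sigma>"
  shows "\<alpha> * \<beta> \<in> ray_elements R m \<Sigma>"
proof -
  obtain u t where a: "\<alpha> \<noteq> 0" "u \<in> m" "t \<in> S_m R m" "t \<noteq> 0" "\<alpha> - 1 = u / t" "\<forall>\<rho>\<in>\<Sigma>. \<rho> \<alpha> > 0"
    using assms(1) unfolding ray_elements_def by blast
  obtain u' t' where b: "\<beta> \<noteq> 0" "u' \<in> m" "t' \<in> S_m R m" "t' \<noteq> 0" "\<beta> - 1 = u' / t'" "\<forall>\<rho>\<in>\<Sigma>. \<rho> \<beta> > 0"
    using assms(2) unfolding ray_elements_def by blast
  have "\<alpha> * \<beta> - 1 = (1 + u / t) * (1 + u' / t') - 1"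
    using a(5) b(5) by (simp add: algebra_simps)
  also have "\<dots> = (u * t' + u' * t + u * u') / (t * t')"
    using a(4) b(4) by (simp add: field_simps)
  finally have "\<alpha> * \<beta> - 1 = (u * t' + u' * t + u * u') / (t * t')" .
  moreover have "u * t' + u' * t + u * u' \<in> m"
    using a b S_m_subset modulus_subset
    by (intro submodule_add[OF modulus_submodule] submodule_mult_right[OF modulus_submodule]) auto
  moreover have "t * t' \<in> S_m R m" "t * t' \<noteq> 0" using a b S_m_mult by auto
  moreover have "\<forall>\<rho>\<in>\<Sigma>. \<rho> (\<alpha> * \<beta>) > 0" using a(6) b(6) embeddings by (simp add: real_embedding_mult)
  moreover have "\<alpha> * \<beta> \<noteq> 0" using a(1) b(1) by simp
  ultimately show ?thesis unfolding ray_elements_def by blast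
qed

lemma ray_elements_inverse:
  assumes "\<beta> \<in> ray_elements R m \<Sigma>"
  shows "inverse \<beta> \<in> ray_elements R m \<Sigma>"
proof -
  obtain u t where b: "\<beta> \<noteq> 0" "u \<in> m" "t \<in> S_m R m" "t \<noteq> 0" "\<beta> - 1 = u / t" "\<forall>\<rho>\<in>\<Sigma>. \<rho> \<beta> > 0"
    using assms unfolding ray_elements_def by blast
  define y where "y = t + u"
  have "\<beta> = 1 + u / t" using b(5) by (simp add: algebra_simps)
  also have "\<dots> = y / t" using b(4) unfolding y_def by (simp add: field_simps)
  finally have y: "inverse \<beta> = t / y" "y \<noteq> 0" using b(1) by auto
  obtain c z where cz: "c \<in> R" "z \<in> m" "t * c + z = 1" using b(3) S_m_iff by blast
  have "y * c + (z - u * c) = 1" using cz unfolding y_def by (simp add: algebra_simps)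
  moreover have "z - u * c \<in> m"
    using cz b by (intro submodule_diff[OF modulus_submodule] submodule_mult_right[OF modulus_submodule]) auto
  moreover have "y \<in> R" unfolding y_def using b S_m_subset modulus_subset subring_add[OF subring] by auto
  ultimately have "y \<in> S_m R m" using cz S_m_iff by blast
  moreover have "inverse \<beta> - 1 = (- u) / y" using y by (simp add: field_simps y_def)
  moreover have "- u \<in> m" using b(2) by (rule submodule_uminus[OF modulus_submodule])
  moreover have "\<forall>\<rho>\<in>\<Sigma>. \<rho> (inverse \<beta>) > 0" using b(1,6) embeddings by (simp add: real_embedding_inverse)
  moreover have "inverse \<beta> \<noteq> 0" using b(1) by simp
  ultimately show ?thesis unfolding ray_elements_def using y(2) by blast
qed

lemma ideal_class_eq_image:
  assumes "O_submodule R M"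
  shows "ideal_class R m \<Sigma> M = (\<lambda>\<alpha>. smul \<alpha> M) ` ray_elements R m \<Sigma>"
proof -
  have "ideal_class R m \<Sigma> M = (\<Union>P\<in>P_ray R m \<Sigma>. {ideal_mult P M})"
    unfolding ideal_class_def r_coset_def ideal_group_def by simp
  then show ?thesis unfolding P_ray_eq_image using ideal_mult_principal[OF subring assms] by auto
qed

lemma ideal_class_self:
  assumes "O_submodule R M"
  shows "M \<in> ideal_class R m \<Sigma> M"
proof -
  have "smul 1 M \<in> (\<lambda>\<alpha>. smul \<alpha> M) ` ray_elements R m \<Sigma>" using ray_elements_one by (rule imageI)
  then show ?thesis unfolding ideal_class_eq_image[OF assms] by simp
qed

lemma ray_elements_mult_image:
  assumes \<gamma>: "\<gamma> \<in> ray_elements R m \<Sigma>"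
  shows "(\<lambda>\<alpha>. \<alpha> * \<gamma>) ` ray_elements R m \<Sigma> = ray_elements R m \<Sigma>"
proof
  show "(\<lambda>\<alpha>. \<alpha> * \<gamma>) ` ray_elements R m \<Sigma> \<subseteq> ray_elements R m \<Sigma>"
    using ray_elements_mult[OF _ \<gamma>] by blast
  show "ray_elements R m \<Sigma> \<subseteq> (\<lambda>\<alpha>. \<alpha> * \<gamma>) ` ray_elements R m \<Sigma>"
  proof
    fix \<alpha> assume "\<alpha> \<in> ray_elements R m \<Sigma>"
    then have "\<alpha> * inverse \<gamma> \<in> ray_elements R m \<Sigma>"
      by (rule ray_elements_mult[OF _ ray_elements_inverse[OF \<gamma>]])
    moreover have "\<alpha> = \<alpha> * inverse \<gamma> * \<gamma>" using \<gamma> unfolding ray_elements_def by simp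
    ultimately show "\<alpha> \<in> (\<lambda>\<alpha>. \<alpha> * \<gamma>) ` ray_elements R m \<Sigma>" by (rule rev_image_eqI)
  qed
qed

lemma ideal_class_smul:
  assumes M: "O_submodule R M" and \<gamma>: "\<gamma> \<in> ray_elements R m \<Sigma>"
  shows "ideal_class R m \<Sigma> (smul \<gamma> M) = ideal_class R m \<Sigma> M"
proof -
  have "ideal_class R m \<Sigma> (smul \<gamma> M) = (\<lambda>\<alpha>. smul \<alpha> M) ` (\<lambda>\<alpha>. \<alpha> * \<gamma>) ` ray_elements R m \<Sigma>"
    unfolding ideal_class_eq_image[OF smul_submodule[OF M]] smul_smul image_image ..
  then show ?thesis unfolding ray_elements_mult_image[OF \<gamma>] ideal_class_eq_image[OF M] .
qed

lemma ideal_class_mult: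
  assumes A: "O_submodule R A" and B: "O_submodule R B"
  shows "set_mult (ideal_group R m) (ideal_class R m \<Sigma> A) (ideal_class R m \<Sigma> B)
    = ideal_class R m \<Sigma> (ideal_mult A B)"
proof -
  have "set_mult (ideal_group R m) (ideal_class R m \<Sigma> A) (ideal_class R m \<Sigma> B)
      = (\<Union>\<beta>\<in>ray_elements R m \<Sigma>. (\<lambda>\<alpha>. smul \<alpha> (ideal_mult A B)) ` (\<lambda>\<alpha>. \<alpha> * \<beta>) ` ray_elements R m \<Sigma>)"
    unfolding set_mult_def ideal_class_eq_image[OF A] ideal_class_eq_image[OF B]
    by (auto simp: ideal_group_def ideal_mult_smul_left ideal_mult_smul_right smul_smul)
  also have "\<dots> = ideal_class R m \<Sigma> (ideal_mult A B)"
    using ray_elements_one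
    by (simp add: ray_elements_mult_image ideal_class_eq_image[OF ideal_mult_submodule[OF B]])
  finally show ?thesis .
qed

lemma carrier_ray_class_group: "carrier (ray_class_group R m \<Sigma>) = ideal_class R m \<Sigma> ` J_star R m"
  unfolding ray_class_group_def FactGroup_def RCOSETS_def ideal_class_def
  by (auto simp: ideal_group_def)

lemma mult_ray_class_group: "monoid.mult (ray_class_group R m \<Sigma>) = set_mult (ideal_group R m)"
  unfolding ray_class_group_def FactGroup_def by simp

end

section \<open>The extension map\<close>

lemma ray_modulus_level_datum: "level_datum R m \<Sigma> \<Longrightarrow> ray_modulus R m \<Sigma>"
  unfolding level_datum_def is_order_def ray_modulus_def by blast

locale level_extension =
  fixes R m :: "'k::field_char_0 set" and \<Sigma> :: "('k \<Rightarrow> real) set"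
    and R' m' :: "'k set" and \<Sigma>' :: "('k \<Rightarrow> real) set"
  assumes level: "level_datum R m \<Sigma>" and level': "level_datum R' m' \<Sigma>'"
    and order_subset: "R \<subseteq> R'" and modulus_extend: "ideal_mult m R' \<subseteq> m'"
    and places_subset: "\<Sigma>' \<subseteq> \<Sigma>"
begin

sublocale src: ray_modulus R m \<Sigma> by (rule ray_modulus_level_datum[OF level])

sublocale tgt: ray_modulus R' m' \<Sigma>' by (rule ray_modulus_level_datum[OF level'])

lemma modulus_subset_target: "m \<subseteq> m'"
  using modulus_extend ideal_mult_mem[of _ m 1 R'] subring_one[OF tgt.subring] by auto

lemma ray_elements_subset: "ray_elements R m \<Sigma> \<subseteq> ray_elements R' m' \<Sigma>'"
proof -
  have "S_m R m \<subseteq> S_m R' m'"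
    using src.S_m_iff tgt.S_m_iff order_subset modulus_subset_target by blast
  then show ?thesis unfolding ray_elements_def using modulus_subset_target places_subset by blast
qed

lemma extension_submodule: "O_submodule R' (ideal_mult a R')"
  by (rule ideal_mult_submodule[OF subring_submodule[OF tgt.subring]])

lemma extension_in_J_star: "a \<in> J_star R m \<Longrightarrow> ideal_mult a R' \<in> J_star R' m'"
  by (rule J_star_extend[OF src.subring tgt.subring order_subset src.modulus tgt.modulus modulus_extend])

lemma ideal_class_extend_cong:
  assumes c: "O_submodule R c" and M: "O_submodule R M"
    and eq: "ideal_class R m \<Sigma> c = ideal_class R m \<Sigma> M"
  shows "ideal_class R' m' \<Sigma>' (ideal_mult c R') = ideal_class R' m' \<Sigma>' (ideal_mult M R')"
proof -
  have "c \<in> ideal_class R m \<Sigma> M" using src.ideal_class_self[OF c] eq by simp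
  then obtain \<alpha> where \<alpha>: "\<alpha> \<in> ray_elements R m \<Sigma>" "c = smul \<alpha> M"
    using src.ideal_class_eq_image[OF M] by blast
  then have "ideal_mult c R' = smul \<alpha> (ideal_mult M R')" by (simp add: ideal_mult_smul_left)
  then show ?thesis
    using tgt.ideal_class_smul[OF extension_submodule] \<alpha>(1) ray_elements_subset by auto
qed

definition ext_map :: "'k set set \<Rightarrow> 'k set set" where
  "ext_map X = ideal_class R' m' \<Sigma>' (ideal_mult (SOME a. a \<in> J_star R m \<and> X = ideal_class R m \<Sigma> a) R')"

lemma ext_map_ideal_class:
  assumes a: "a \<in> J_star R m"
  shows "ext_map (ideal_class R m \<Sigma> a) = ideal_class R' m' \<Sigma>' (ideal_mult a R')"
proof -
  let ?b = "SOME b. b \<in> J_star R m \<and> ideal_class R m \<Sigma> a = ideal_class R m \<Sigma> b"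
  have "?b \<in> J_star R m \<and> ideal_class R m \<Sigma> a = ideal_class R m \<Sigma> ?b"
    using a by (rule someI[where P = "\<lambda>b. b \<in> J_star R m \<and> _ = ideal_class R m \<Sigma> b", OF conjI[OF _ refl]])
  then show ?thesis
    unfolding ext_map_def using ideal_class_extend_cong J_star_submodule a by metis
qed

lemma ext_map_is_ext_map: "is_ext_map R m \<Sigma> R' m' \<Sigma>' ext_map"
  unfolding is_ext_map_def
proof (intro conjI ballI homI)
  show "ext_map (ideal_class R m \<Sigma> a) = ideal_class R' m' \<Sigma>' (ideal_mult a R')" if "a \<in> J_star R m" for a
    using ext_map_ideal_class that .
  show "ext_map X \<in> carrier (ray_class_group R' m' \<Sigma>')" if "X \<in> carrier (ray_class_group R m \<Sigma>)" for X
    using that ext_map_ideal_class extension_in_J_star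
    unfolding src.carrier_ray_class_group tgt.carrier_ray_class_group by auto
  fix X Y
  assume "X \<in> carrier (ray_class_group R m \<Sigma>)" "Y \<in> carrier (ray_class_group R m \<Sigma>)"
  then obtain a b where ab: "a \<in> J_star R m" "X = ideal_class R m \<Sigma> a"
    "b \<in> J_star R m" "Y = ideal_class R m \<Sigma> b"
    unfolding src.carrier_ray_class_group by blast
  have R'R': "ideal_mult R' R' = R'" by (rule ideal_mult_subring_self[OF tgt.subring])
  have "X \<otimes>\<^bsub>ray_class_group R m \<Sigma>\<^esub> Y = ideal_class R m \<Sigma> (ideal_mult a b)"
    using src.ideal_class_mult[OF J_star_submodule J_star_submodule] ab
    by (simp add: src.mult_ray_class_group)
  then have "ext_map (X \<otimes>\<^bsub>ray_class_group R m \<Sigma>\<^esub> Y) = ideal_class R' m' \<Sigma>' (ideal_mult (ideal_mult a b) R')"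
    using ext_map_ideal_class J_star_mult[OF src.subring src.modulus ab(1,3)] by simp
  also have "ideal_mult (ideal_mult a b) R' = ideal_mult (ideal_mult a R') (ideal_mult b R')"
    using ideal_mult_mult_mult[of a b R' R'] R'R' by simp
  also have "ideal_class R' m' \<Sigma>' \<dots> = ext_map X \<otimes>\<^bsub>ray_class_group R' m' \<Sigma>'\<^esub> ext_map Y"
    using tgt.ideal_class_mult[OF extension_submodule extension_submodule] ab ext_map_ideal_class
    by (simp add: tgt.mult_ray_class_group)
  finally show "ext_map (X \<otimes>\<^bsub>ray_class_group R m \<Sigma>\<^esub> Y) = ext_map X \<otimes>\<^bsub>ray_class_group R' m' \<Sigma>'\<^esub> ext_map Y" .
qed

lemma is_ext_map_unique:
  assumes "is_ext_map R m \<Sigma> R' m' \<Sigma>' h" "X \<in> carrier (ray_class_group R m \<Sigma>)"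
  shows "h X = ext_map X"
  using assms ext_map_ideal_class unfolding is_ext_map_def src.carrier_ray_class_group by auto

end

lemma is_ext_map_comp:
  assumes e1: "level_extension R m \<Sigma> R' m' \<Sigma>'" and e2: "level_extension R' m' \<Sigma>' R'' m'' \<Sigma>''"
    and h1: "is_ext_map R m \<Sigma> R' m' \<Sigma>' h1" and h2: "is_ext_map R' m' \<Sigma>' R'' m'' \<Sigma>'' h2"
    and h3: "is_ext_map R m \<Sigma> R'' m'' \<Sigma>'' h3"
    and X: "X \<in> carrier (ray_class_group R m \<Sigma>)"
  shows "h2 (h1 X) = h3 X"
proof -
  interpret e1: level_extension R m \<Sigma> R' m' \<Sigma>' by fact
  interpret e2: level_extension R' m' \<Sigma>' R'' m'' \<Sigma>'' by fact
  obtain a where a: "a \<in> J_star R m" "X = ideal_class R m \<Sigma> a"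
    using X unfolding e1.src.carrier_ray_class_group by blast
  have "h2 (h1 X) = ideal_class R'' m'' \<Sigma>'' (ideal_mult (ideal_mult a R') R'')"
    using h1 h2 a e1.extension_in_J_star unfolding is_ext_map_def by simp
  also have "ideal_mult (ideal_mult a R') R'' = ideal_mult a R''"
    using ideal_mult_subring_subset[OF e1.tgt.subring e2.tgt.subring e2.order_subset]
    by (simp add: ideal_mult_assoc)
  finally show ?thesis using h3 a unfolding is_ext_map_def by simp
qed

section \<open>Finiteness properties of number fields and their orders\<close>

definition rat_scale :: "rat \<Rightarrow> 'k::field_char_0 \<Rightarrow> 'k" where
  "rat_scale q x = of_rat q * x"

interpretation rat_vs: vector_space "rat_scale :: rat \<Rightarrow> 'k::field_char_0 \<Rightarrow> 'k"
  by unfold_locales (simp_all add: rat_scale_def algebra_simps of_rat_add of_rat_mult)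

lemma rat_independent_iff:
  "\<not> rat_vs.dependent S \<longleftrightarrow>
    (\<forall>t u. finite t \<and> t \<subseteq> S \<and> (\<Sum>v\<in>t. of_rat (u v) * v) = (0::'k::field_char_0) \<longrightarrow> (\<forall>v\<in>t. u v = 0))"
  unfolding rat_vs.dependent_explicit rat_scale_def by blast

lemma sum_two_points:
  fixes b :: "nat \<Rightarrow> 'a::ring_1"
  assumes "finite I" "i \<in> I" "j \<in> I" "i \<noteq> j"
  shows "(\<Sum>l\<in>I. (if l = i then 1 else if l = j then - 1 else 0) * b l) = b i - b j"
proof -
  have "(\<Sum>l\<in>I. (if l = i then 1 else if l = j then - 1 else 0) * b l)
      = (\<Sum>l\<in>I. (if l = i then b l else 0) - (if l = j then b l else 0))"
    using assms(4) by (intro sum.cong) auto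
  also have "\<dots> = b i - b j" using assms by (simp add: sum_subtractf)
  finally show ?thesis .
qed

lemma sum_reindex_family:
  assumes "inj_on w I" "t \<subseteq> w ` I" "finite I"
  shows "(\<Sum>i\<in>I. if w i \<in> t then f (w i) else 0) = (\<Sum>v\<in>t. f v)"
proof -
  have "(\<Sum>i\<in>I. if w i \<in> t then f (w i) else 0) = (\<Sum>i\<in>{i\<in>I. w i \<in> t}. f (w i))"
    using assms(3) by (simp add: sum.inter_filter)
  also have "\<dots> = (\<Sum>v\<in>w ` {i\<in>I. w i \<in> t}. f v)"
    using assms(1) by (subst sum.reindex) (auto intro: inj_on_subset)
  also have "w ` {i\<in>I. w i \<in> t} = t" using assms(2) by auto
  finally show ?thesis .
qed

lemma Q_basis_inj:
  assumes b: "Q_basis b n"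
  shows "inj_on b {..<n}"
proof (rule inj_onI, rule ccontr)
  fix i j assume ij: "i \<in> {..<n}" "j \<in> {..<n}" "b i = b j" "i \<noteq> j"
  define c where "c l = (if l = i then 1 else if l = j then - 1 else (0::rat))" for l
  have "(\<Sum>l<n. of_rat (c l) * b l) = (\<Sum>l<n. (if l = i then 1 else if l = j then - 1 else 0) * b l)"
    by (intro sum.cong) (auto simp: c_def of_rat_minus)
  also have "\<dots> = 0" using sum_two_points[of "{..<n}" i j b] ij by simp
  finally have "c i = 0" using b ij unfolding Q_basis_def by blast
  then show False unfolding c_def by simp
qed

lemma Q_basis_independent:
  fixes b :: "nat \<Rightarrow> 'k::field_char_0"
  assumes b: "Q_basis b n"
  shows "\<not> rat_vs.dependent (b ` {..<n})"
  unfolding rat_independent_iff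
proof (intro allI impI ballI)
  fix t u v assume tu: "finite t \<and> t \<subseteq> b ` {..<n} \<and> (\<Sum>v\<in>t. of_rat (u v) * v) = 0" and v: "v \<in> t"
  define c where "c i = (if b i \<in> t then u (b i) else 0)" for i
  have "(\<Sum>i<n. of_rat (c i) * b i) = (\<Sum>i<n. if b i \<in> t then of_rat (u (b i)) * b i else 0)"
    unfolding c_def by (intro sum.cong) auto
  also have "\<dots> = (\<Sum>v\<in>t. of_rat (u v) * v)"
    by (rule sum_reindex_family[OF Q_basis_inj[OF b]]) (use tu in auto)
  also have "\<dots> = 0" using tu by simp
  finally have "\<forall>i<n. c i = 0" using b unfolding Q_basis_def by blast
  moreover obtain i where "i < n" "v = b i" using tu v by blast
  ultimately show "u v = 0" unfolding c_def using v by auto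
qed

lemma Q_basis_span:
  fixes b :: "nat \<Rightarrow> 'k::field_char_0"
  assumes b: "Q_basis b n"
  shows "rat_vs.span (b ` {..<n}) = UNIV"
proof -
  have "x \<in> rat_vs.span (b ` {..<n})" for x
  proof -
    obtain c where c: "x = (\<Sum>i<n. of_rat (c i) * b i)" using b unfolding Q_basis_def by blast
    have "of_rat (c i) * b i \<in> rat_vs.span (b ` {..<n})" if "i < n" for i
      using rat_vs.span_scale[OF rat_vs.span_base[of "b i" "b ` {..<n}"], of "c i"] that
      unfolding rat_scale_def by simp
    then show ?thesis unfolding c by (intro rat_vs.span_sum) auto
  qed
  then show ?thesis by auto
qed

lemma Q_basis_independent_bound:
  fixes b :: "nat \<Rightarrow> 'k::field_char_0" and S :: "'k set"
  assumes "Q_basis b n" "\<not> rat_vs.dependent S"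
  shows "finite S \<and> card S \<le> n"
  using rat_vs.independent_span_bound[of "b ` {..<n}" S] assms Q_basis_span
    card_image[OF Q_basis_inj[OF assms(1)]] by auto

lemma nf_degree_eq:
  fixes b :: "nat \<Rightarrow> 'k::field_char_0"
  assumes b: "Q_basis b n"
  shows "nf_degree TYPE('k) = n"
  unfolding nf_degree_def
proof (rule the_equality)
  show "\<exists>b :: nat \<Rightarrow> 'k. Q_basis b n" using b by blast
  fix n' assume "\<exists>b :: nat \<Rightarrow> 'k. Q_basis b n'"
  then obtain b' :: "nat \<Rightarrow> 'k" where b': "Q_basis b' n'" by blast
  have "card (b' ` {..<n'}) \<le> n" "card (b ` {..<n}) \<le> n'"
    using Q_basis_independent_bound Q_basis_independent b b' by blast+
  then show "n' = n" using card_image[OF Q_basis_inj[OF b]] card_image[OF Q_basis_inj[OF b']] by simp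
qed

lemma common_denominator:
  fixes u :: "'a \<Rightarrow> rat"
  assumes "finite A"
  shows "\<exists>D::int. D > 0 \<and> (\<forall>v\<in>A. \<exists>z::int. of_int D * u v = of_int z)"
  using assms
proof (induction A rule: finite_induct)
  case empty
  then show ?case by (intro exI[of _ 1]) simp
next
  case (insert a A)
  then obtain D where D: "D > 0" "\<forall>v\<in>A. \<exists>z::int. of_int D * u v = of_int z" by blast
  obtain p q where pq: "quotient_of (u a) = (p, q)" by (cases "quotient_of (u a)")
  have q: "q > 0" and ua: "u a = of_int p / of_int q"
    using quotient_of_denom_pos[OF pq] quotient_of_div[OF pq] by auto
  have "\<exists>z::int. of_int (D * q) * u v = of_int z" if "v \<in> insert a A" for v
  proof (cases "v = a")
    case True
    then show ?thesis using q ua by (intro exI[of _ "D * p"]) simp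
  next
    case False
    then have "v \<in> A" using that by simp
    then obtain z where "of_int D * u v = of_int z" using D by blast
    then show ?thesis by (intro exI[of _ "q * z"]) (simp add: algebra_simps)
  qed
  then show ?case using D q by (intro exI[of _ "D * q"]) simp
qed

lemma Z_indep_inj:
  assumes w: "Z_indep w n"
  shows "inj_on w {..<n}"
proof (rule inj_onI, rule ccontr)
  fix i j assume ij: "i \<in> {..<n}" "j \<in> {..<n}" "w i = w j" "i \<noteq> j"
  define c where "c l = (if l = i then 1 else if l = j then - 1 else (0::int))" for l
  have "(\<Sum>l<n. of_int (c l) * w l) = (\<Sum>l<n. (if l = i then 1 else if l = j then - 1 else 0) * w l)"
    by (intro sum.cong) (auto simp: c_def)
  also have "\<dots> = 0" using sum_two_points[of "{..<n}" i j w] ij by simp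
  finally have "c i = 0" using w ij unfolding Z_indep_def by blast
  then show False unfolding c_def by simp
qed

lemma Z_indep_independent:
  fixes w :: "nat \<Rightarrow> 'k::field_char_0"
  assumes w: "Z_indep w n"
  shows "\<not> rat_vs.dependent (w ` {..<n})"
  unfolding rat_independent_iff
proof (intro allI impI ballI)
  fix t u v assume tu: "finite t \<and> t \<subseteq> w ` {..<n} \<and> (\<Sum>v\<in>t. of_rat (u v) * v) = 0" and v: "v \<in> t"
  obtain D :: int where D: "D > 0" "\<forall>v\<in>t. \<exists>z::int. of_int D * u v = of_int z"
    using common_denominator tu by blast
  then obtain z where z: "\<forall>v\<in>t. of_int D * u v = of_int (z v)" by metis
  have "(\<Sum>v\<in>t. of_int (z v) * v) = (\<Sum>v\<in>t. of_rat (of_int D * u v) * v)"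
    using z by (intro sum.cong) auto
  also have "\<dots> = of_int D * (\<Sum>v\<in>t. of_rat (u v) * v)"
    by (simp add: sum_distrib_left of_rat_mult mult.assoc)
  finally have z0: "(\<Sum>v\<in>t. of_int (z v) * v) = 0" using tu by simp
  define c where "c i = (if w i \<in> t then z (w i) else 0)" for i
  have "(\<Sum>i<n. of_int (c i) * w i) = (\<Sum>i<n. if w i \<in> t then of_int (z (w i)) * w i else 0)"
    unfolding c_def by (intro sum.cong) auto
  also have "\<dots> = (\<Sum>v\<in>t. of_int (z v) * v)"
    by (rule sum_reindex_family[OF Z_indep_inj[OF w]]) (use tu in auto)
  finally have "\<forall>i<n. c i = 0" using w z0 unfolding Z_indep_def by auto
  moreover obtain i where "i < n" "v = w i" using tu v by blast
  ultimately have "z v = 0" unfolding c_def using v by auto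
  then have "of_int D * u v = 0" using z v by simp
  then show "u v = 0" using D(1) by simp
qed

lemma order_int_multiple:
  assumes nf: "number_field TYPE('k::field_char_0)" and R: "is_order (R :: 'k set)"
  shows "\<exists>d::int. d \<noteq> 0 \<and> of_int d * y \<in> R"
proof -
  obtain n b where b: "Q_basis (b :: nat \<Rightarrow> 'k) n" using nf unfolding number_field_def by blast
  obtain w where w: "\<forall>i<n. w i \<in> R" "Z_indep w n" "R = Z_span w n"
    using R nf_degree_eq[OF b] unfolding is_order_def by auto
  have sr: "is_subring R" using R unfolding is_order_def by blast
  define W where "W = w ` {..<n}"
  have indW: "\<not> rat_vs.dependent W" unfolding W_def by (rule Z_indep_independent[OF w(2)])
  have cardW: "card W = n" "finite W" unfolding W_def using card_image[OF Z_indep_inj[OF w(2)]] by auto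
  have "y \<in> rat_vs.span W"
  proof (rule ccontr)
    assume y: "y \<notin> rat_vs.span W"
    then have "\<not> rat_vs.dependent (insert y W)" using rat_vs.independent_insertI[OF y indW] by simp
    then have "card (insert y W) \<le> n" using Q_basis_independent_bound[OF b] by blast
    moreover have "y \<notin> W" using y rat_vs.span_base[of y W] by blast
    ultimately show False using cardW by simp
  qed
  then obtain u where u: "y = (\<Sum>v\<in>W. of_rat (u v) * v)"
    using rat_vs.span_finite[OF cardW(2)] unfolding rat_scale_def by auto
  obtain D :: int where D: "D > 0" "\<forall>v\<in>W. \<exists>z::int. of_int D * u v = of_int z"
    using common_denominator[OF cardW(2)] by blast
  have "of_int D * y = (\<Sum>v\<in>W. of_rat (of_int D * u v) * v)"
    unfolding u by (simp add: sum_distrib_left of_rat_mult mult.assoc)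
  also have "\<dots> \<in> R"
  proof (rule subring_sum[OF sr])
    fix v assume v: "v \<in> W"
    then obtain z where "of_int D * u v = of_int z" using D by blast
    moreover have "v \<in> R" using v w(1) unfolding W_def by auto
    ultimately show "of_rat (of_int D * u v) * v \<in> R" using subring_mult[OF sr subring_of_int[OF sr]] by simp
  qed
  finally show ?thesis using D(1) by (intro exI[of _ D]) simp
qed

lemma number_field_algebraic:
  assumes nf: "number_field TYPE('k::field_char_0)"
  shows "\<exists>(c :: nat \<Rightarrow> rat) n. (\<exists>i\<le>n. c i \<noteq> 0) \<and> (\<Sum>i\<le>n. of_rat (c i) * y ^ i) = (0::'k)"
proof -
  obtain n b where b: "Q_basis (b :: nat \<Rightarrow> 'k) n" using nf unfolding number_field_def by blast
  show ?thesis
  proof (cases "inj_on (\<lambda>i. y ^ i) {..n}")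
    case False
    then obtain i j where ij: "i \<le> n" "j \<le> n" "i \<noteq> j" "y ^ i = y ^ j" unfolding inj_on_def by auto
    define c where "c l = (if l = i then 1 else if l = j then - 1 else (0::rat))" for l
    have "(\<Sum>l\<le>n. of_rat (c l) * y ^ l) = (\<Sum>l\<le>n. (if l = i then 1 else if l = j then - 1 else 0) * y ^ l)"
      by (intro sum.cong) (auto simp: c_def of_rat_minus)
    also have "\<dots> = 0" using sum_two_points[of "{..n}" i j "\<lambda>l. y ^ l"] ij by simp
    finally show ?thesis using ij(1) unfolding c_def by (intro exI[of _ c] exI[of _ n]) (auto simp: c_def)
  next
    case True
    define S where "S = (\<lambda>i. y ^ i) ` {..n}"
    have "card S = Suc n" unfolding S_def using card_image[OF True] by simp
    then have "rat_vs.dependent S" using Q_basis_independent_bound[OF b, of S] by auto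
    then obtain t u where tu: "finite t" "t \<subseteq> S" "(\<Sum>v\<in>t. of_rat (u v) * v) = 0" "\<exists>v\<in>t. u v \<noteq> 0"
      unfolding rat_vs.dependent_explicit rat_scale_def by blast
    define c where "c i = (if y ^ i \<in> t then u (y ^ i) else 0)" for i
    have "(\<Sum>i\<le>n. of_rat (c i) * y ^ i) = (\<Sum>i\<le>n. if y ^ i \<in> t then of_rat (u (y ^ i)) * y ^ i else 0)"
      unfolding c_def by (intro sum.cong) auto
    also have "\<dots> = 0"
      using sum_reindex_family[OF True, of t "\<lambda>v. of_rat (u v) * v"] tu by (auto simp: S_def)
    finally have "(\<Sum>i\<le>n. of_rat (c i) * y ^ i) = 0" .
    moreover obtain i where "i \<le> n" "c i \<noteq> 0" using tu unfolding S_def c_def by auto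
    ultimately show ?thesis by blast
  qed
qed

lemma real_embedding_values_finite:
  assumes "number_field TYPE('k::field_char_0)"
  shows "finite {\<rho> (y::'k) | \<rho>. real_embedding \<rho>}"
proof -
  obtain c n where cn: "\<exists>i\<le>n. c i \<noteq> 0" "(\<Sum>i\<le>n. of_rat (c i) * y ^ i) = (0::'k)"
    using number_field_algebraic[OF assms] by blast
  define P :: "real poly" where "P = (\<Sum>i\<le>n. monom (of_rat (c i)) i)"
  obtain i where i: "i \<le> n" "c i \<noteq> 0" using cn by blast
  have "coeff P i = of_rat (c i)" unfolding P_def coeff_sum coeff_monom using i by (simp add: sum.delta)
  then have "P \<noteq> 0" using i by auto
  moreover have "{\<rho> y | \<rho>. real_embedding \<rho>} \<subseteq> {x. poly P x = 0}"
  proof safe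
    fix \<rho> :: "'k \<Rightarrow> real" assume \<rho>: "real_embedding \<rho>"
    have "poly P (\<rho> y) = \<rho> (\<Sum>i\<le>n. of_rat (c i) * y ^ i)"
      unfolding P_def using \<rho>
      by (simp add: poly_sum poly_monom real_embedding_sum real_embedding_mult real_embedding_of_rat
          real_embedding_power)
    then show "poly P (\<rho> y) = 0" using cn(2) real_embedding_zero[OF \<rho>] by simp
  qed
  ultimately show ?thesis using poly_roots_finite finite_subset by blast
qed

lemma real_embeddings_bounded:
  assumes "number_field TYPE('k::field_char_0)"
  shows "\<exists>B::int. \<forall>\<rho>. real_embedding \<rho> \<longrightarrow> \<bar>\<rho> (y::'k)\<bar> < of_int B"
proof -
  define V where "V = {\<rho> y | \<rho>. real_embedding \<rho>}"
  define M where "M = Max (insert 0 (abs ` V))"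
  have "finite V" unfolding V_def by (rule real_embedding_values_finite[OF assms])
  then have "\<bar>\<rho> y\<bar> \<le> M" if "real_embedding \<rho>" for \<rho>
    unfolding M_def using that by (intro Max_ge) (auto simp: V_def)
  moreover have "M < of_int (\<lceil>M\<rceil> + 1)" by linarith
  ultimately show ?thesis by (intro exI[of _ "\<lceil>M\<rceil> + 1"]) force
qed

lemma Z_span_finite_quotient:
  assumes "N \<noteq> 0"
  shows "\<exists>F. finite F \<and> (\<forall>x\<in>Z_span w n. \<exists>y\<in>F. x - y \<in> smul (of_int N) (Z_span w n))"
proof -
  define M where "M = \<bar>N\<bar>"
  have M: "M > 0" unfolding M_def using assms by simp
  define F where "F = (\<lambda>c. \<Sum>i<n. of_int (c i) * w i) ` ({..<n} \<rightarrow>\<^sub>E {0..<M})"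
  have "\<exists>y\<in>F. x - y \<in> smul (of_int N) (Z_span w n)" if x: "x \<in> Z_span w n" for x
  proof -
    obtain c where c: "x = (\<Sum>i<n. of_int (c i) * w i)" using x unfolding Z_span_def by blast
    define y where "y = (\<Sum>i<n. of_int (c i mod M) * w i)"
    have "restrict (\<lambda>i. c i mod M) {..<n} \<in> {..<n} \<rightarrow>\<^sub>E {0..<M}" using M by auto
    then have "y \<in> F" unfolding F_def y_def by (rule rev_image_eqI) simp
    have "x - y = (\<Sum>i<n. of_int (c i - c i mod M) * w i)"
      unfolding c y_def by (simp add: sum_subtractf left_diff_distrib)
    also have "\<dots> = (\<Sum>i<n. of_int N * (of_int (sgn N * (c i div M)) * w i))"
    proof (intro sum.cong refl)
      fix i
      have "c i - c i mod M = N * (sgn N * (c i div M))"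
        unfolding minus_mod_eq_mult_div M_def by (simp add: abs_sgn mult.assoc)
      then show "of_int (c i - c i mod M) * w i = of_int N * (of_int (sgn N * (c i div M)) * w i)"
        by (simp add: mult.assoc)
    qed
    also have "\<dots> = of_int N * (\<Sum>i<n. of_int (sgn N * (c i div M)) * w i)"
      by (simp add: sum_distrib_left)
    finally have eq: "x - y = of_int N * (\<Sum>i<n. of_int (sgn N * (c i div M)) * w i)" .
    have "(\<Sum>i<n. of_int (sgn N * (c i div M)) * w i) \<in> Z_span w n"
      unfolding Z_span_def by (rule CollectI, rule exI[of _ "\<lambda>i. sgn N * (c i div M)"]) (rule refl)
    then have "x - y \<in> smul (of_int N) (Z_span w n)" unfolding eq by (rule smul_mem)
    then show ?thesis using \<open>y \<in> F\<close> by blast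
  qed
  moreover have "finite F" unfolding F_def by (intro finite_imageI finite_PiE) auto
  ultimately show ?thesis by blast
qed

lemma Z_span_int_multiple:
  assumes R: "is_subring R" and multiples: "\<forall>i<n. \<exists>d::int. d \<noteq> 0 \<and> of_int d * w i \<in> R"
  shows "\<exists>D::int. D \<noteq> 0 \<and> (\<forall>x\<in>Z_span w n. of_int D * x \<in> R)"
proof -
  obtain d where d: "\<forall>i<n. d i \<noteq> 0 \<and> of_int (d i) * w i \<in> R" using multiples by metis
  define D where "D = (\<Prod>i<n. d i)"
  have Dw: "of_int D * w j \<in> R" if j: "j < n" for j
  proof -
    have "D = (\<Prod>i\<in>{..<n} - {j}. d i) * d j"
      unfolding D_def using prod.remove[of "{..<n}" j d] j by (simp add: mult.commute)
    then have "of_int D * w j = of_int (\<Prod>i\<in>{..<n} - {j}. d i) * (of_int (d j) * w j)"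
      by (simp add: mult.assoc)
    moreover have "of_int (\<Prod>i\<in>{..<n} - {j}. d i) * (of_int (d j) * w j) \<in> R"
      by (rule subring_mult[OF R subring_of_int[OF R]]) (use d j in blast)
    ultimately show ?thesis by (simp only:)
  qed
  have "of_int D * (\<Sum>i<n. of_int (c i) * w i) \<in> R" for c
  proof -
    have "of_int D * (of_int (c i) * w i) \<in> R" if "i < n" for i
      using subring_mult[OF R subring_of_int[OF R] Dw[OF that], of "c i"] by (simp add: mult.left_commute)
    then show ?thesis unfolding sum_distrib_left by (intro subring_sum[OF R]) simp
  qed
  moreover have "D \<noteq> 0" unfolding D_def using d by simp
  ultimately show ?thesis unfolding Z_span_def by blast
qed

lemma order_submodule_int_mem:
  assumes nf: "number_field TYPE('k::field_char_0)" and R: "is_order (R :: 'k set)"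
    and M: "O_submodule R M" "z \<in> M" "z \<noteq> 0"
  obtains d :: int where "d \<noteq> 0" "of_int d \<in> M"
proof -
  obtain d where d: "d \<noteq> 0" "of_int d * (1 / z) \<in> R" using order_int_multiple[OF nf R] by blast
  have "z * (of_int d * (1 / z)) \<in> M" by (rule submodule_mult_right[OF M(1) d(2) M(2)])
  then show ?thesis using that d(1) M(3) by simp
qed

lemma order_int_multiple_in_modulus:
  assumes nf: "number_field TYPE('k::field_char_0)" and R: "is_order (R :: 'k set)" and R': "is_order R'"
    and m: "integral_ideal R m" "m \<noteq> {0}"
  shows "\<exists>N::int. N \<noteq> 0 \<and> (\<forall>x\<in>R'. of_int N * x \<in> m)"
proof -
  have sr: "is_subring R" using R unfolding is_order_def by blast
  have m_sub: "O_submodule R m" using m unfolding integral_ideal_def by blast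
  obtain z where "z \<in> m" "z \<noteq> 0" using m submodule_zero[OF m_sub] by blast
  then obtain d where d: "d \<noteq> 0" and dm: "of_int d \<in> m" by (rule order_submodule_int_mem[OF nf R m_sub])
  obtain w where w: "R' = Z_span w (nf_degree TYPE('k))" using R' unfolding is_order_def by blast
  have "\<forall>i<nf_degree TYPE('k). \<exists>d::int. d \<noteq> 0 \<and> of_int d * w i \<in> R"
    using order_int_multiple[OF nf R] by blast
  then obtain D where D: "D \<noteq> 0" "\<forall>x\<in>R'. of_int D * x \<in> R"
    using Z_span_int_multiple[OF sr] w by blast
  have "of_int (d * D) * x \<in> m" if "x \<in> R'" for x
    using submodule_mult_right[OF m_sub D(2)[rule_format, OF that] dm] by (simp add: ac_simps)
  then show ?thesis using d(1) D(1) by (intro exI[of _ "d * D"]) simp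
qed

section \<open>Idempotents modulo an ideal of finite index\<close>

locale finite_quotient =
  fixes R I :: "'k::field_char_0 set"
  assumes subring: "is_subring R" and ideal: "integral_ideal R I"
    and finite_representatives: "\<exists>F. finite F \<and> (\<forall>x\<in>R. \<exists>y\<in>F. x - y \<in> I)"
begin

definition cong_mod :: "'k \<Rightarrow> 'k \<Rightarrow> bool" where
  "cong_mod x y \<longleftrightarrow> x - y \<in> I"

lemma ideal_submodule: "O_submodule R I"
  using ideal unfolding integral_ideal_def by blast

lemma cong_mod_refl: "cong_mod x x"
  unfolding cong_mod_def using submodule_zero[OF ideal_submodule] by simp

lemma cong_mod_sym: "cong_mod x y \<Longrightarrow> cong_mod y x"
  unfolding cong_mod_def using submodule_uminus[OF ideal_submodule] by fastforce

lemma cong_mod_trans [trans]: "cong_mod x y \<Longrightarrow> cong_mod y z \<Longrightarrow> cong_mod x z"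
  unfolding cong_mod_def using submodule_add[OF ideal_submodule, of "x - y" "y - z"] by simp

lemma cong_mod_add: "cong_mod x y \<Longrightarrow> cong_mod x' y' \<Longrightarrow> cong_mod (x + x') (y + y')"
  unfolding cong_mod_def using submodule_add[OF ideal_submodule, of "x - y" "x' - y'"]
  by (simp add: algebra_simps)

lemma cong_mod_diff: "cong_mod x y \<Longrightarrow> cong_mod x' y' \<Longrightarrow> cong_mod (x - x') (y - y')"
  unfolding cong_mod_def using submodule_diff[OF ideal_submodule, of "x - y" "x' - y'"]
  by (simp add: algebra_simps)

lemma cong_mod_mult_left: "r \<in> R \<Longrightarrow> cong_mod x y \<Longrightarrow> cong_mod (r * x) (r * y)"
  unfolding cong_mod_def using submodule_mult_left[OF ideal_submodule, of r "x - y"]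
  by (simp add: algebra_simps)

lemma cong_mod_mult_right: "r \<in> R \<Longrightarrow> cong_mod x y \<Longrightarrow> cong_mod (x * r) (y * r)"
  using cong_mod_mult_left by (simp add: mult.commute)

lemma cong_mod_mult: "x \<in> R \<Longrightarrow> y' \<in> R \<Longrightarrow> cong_mod x x' \<Longrightarrow> cong_mod y y' \<Longrightarrow> cong_mod (x * y) (x' * y')"
  using cong_mod_trans[OF cong_mod_mult_left[of x y y'] cong_mod_mult_right[of y' x x']] by simp

lemma cong_mod_zero_mult: "r \<in> R \<Longrightarrow> cong_mod x 0 \<Longrightarrow> cong_mod (r * x) 0"
  using cong_mod_mult_left[of r x 0] by simp

lemma cong_mod_sum: "(\<And>i. i \<in> A \<Longrightarrow> cong_mod (f i) (g i)) \<Longrightarrow> cong_mod (sum f A) (sum g A)"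
  by (induction A rule: infinite_finite_induct) (auto intro: cong_mod_refl cong_mod_add)

lemma cong_mod_idempotent_orthogonal_compl: "cong_mod (f * f) f \<Longrightarrow> cong_mod (f * (1 - f)) 0"
  unfolding cong_mod_def using submodule_uminus[OF ideal_submodule, of "f * f - f"]
  by (simp add: algebra_simps)

lemma cong_mod_idempotent_compl: "cong_mod (f * f) f \<Longrightarrow> cong_mod ((1 - f) * (1 - f)) (1 - f)"
  using cong_mod_diff[OF cong_mod_refl cong_mod_idempotent_orthogonal_compl, of f "1 - f"]
  by (simp add: algebra_simps)

lemma cong_mod_idempotent_mult:
  assumes "E \<in> R" "f \<in> R" "cong_mod (E * E) E" "cong_mod (f * f) f"
  shows "cong_mod ((E * f) * (E * f)) (E * f)"
  using cong_mod_mult[OF subring_mult[OF subring assms(1,1)] assms(2-4)] by (simp add: ac_simps)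

lemma cong_mod_absorb_trans:
  assumes "e \<in> R" "E \<in> R" "cong_mod (e * E') e" "cong_mod (E' * E) E'"
  shows "cong_mod (e * E) e"
proof -
  have "cong_mod (e * E) (e * E' * E)" by (rule cong_mod_mult_right[OF assms(2) cong_mod_sym[OF assms(3)]])
  also have "e * E' * E = e * (E' * E)" by (simp add: mult.assoc)
  also have "cong_mod \<dots> (e * E')" by (rule cong_mod_mult_left[OF assms(1,4)])
  also have "cong_mod \<dots> e" by (rule assms(3))
  finally show ?thesis .
qed

lemma cong_mod_idempotent_power:
  assumes "f \<in> R" "cong_mod (f * f) f" "n \<ge> 1"
  shows "cong_mod (f ^ n) f"
  using assms(3)
proof (induction n rule: dec_induct)
  case (step n)
  then have "cong_mod (f * f ^ n) (f * f)" using cong_mod_mult_left[OF assms(1)] by blast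
  then show ?case using cong_mod_trans assms(2) by simp
qed (simp add: cong_mod_refl)

text \<open>Pigeonhole: the powers of \<open>g\<close> modulo \<open>I\<close> are eventually periodic, and a suitable power
  in the periodic part is idempotent.\<close>
lemma power_idempotent:
  assumes g: "g \<in> R"
  shows "\<exists>n\<ge>1. cong_mod (g ^ (2 * n)) (g ^ n)"
proof -
  obtain F where F: "finite F" "\<forall>x\<in>R. \<exists>y\<in>F. x - y \<in> I" using finite_representatives by blast
  have "\<forall>k. \<exists>y. y \<in> F \<and> g ^ k - y \<in> I" using F(2) subring_power[OF subring g] by blast
  then obtain rep where rep: "\<And>k. rep k \<in> F \<and> g ^ k - rep k \<in> I" by metis
  have "\<not> inj rep"
  proof
    assume "inj rep"
    moreover have "range rep \<subseteq> F" using rep by auto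
    ultimately show False using F(1) finite_imageD[of rep UNIV] finite_subset by auto
  qed
  then obtain i0 j0 where ij0: "i0 \<noteq> j0" "rep i0 = rep j0" unfolding inj_def by blast
  have "(g ^ i0 - rep i0) - (g ^ j0 - rep j0) \<in> I"
    using rep submodule_diff[OF ideal_submodule] by blast
  then have "cong_mod (g ^ i0) (g ^ j0)" unfolding cong_mod_def using ij0(2) by simp
  then obtain i j where ij: "i < j" "cong_mod (g ^ i) (g ^ j)"
    using ij0(1) cong_mod_sym by (metis linorder_neqE_nat)
  define p where "p = j - i"
  have step: "cong_mod (g ^ k) (g ^ (k + p))" if "k \<ge> i" for k
  proof -
    have "cong_mod (g ^ (k - i) * g ^ i) (g ^ (k - i) * g ^ j)"
      by (rule cong_mod_mult_left[OF subring_power[OF subring g] ij(2)])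
    then show ?thesis using that ij(1) by (simp add: power_add[symmetric] p_def)
  qed
  have iter: "cong_mod (g ^ k) (g ^ (k + q * p))" if "k \<ge> i" for k q
  proof (induction q)
    case (Suc q)
    then show ?case
      using cong_mod_trans[OF Suc step[of "k + q * p"]] that by (simp add: algebra_simps)
  qed (simp add: cong_mod_refl)
  define n where "n = (i + 1) * p"
  have "p \<ge> 1" using ij(1) unfolding p_def by simp
  then have "n \<ge> 1" "n \<ge> i" unfolding n_def using mult_le_mono2[of 1 p "i + 1"] by auto
  moreover have "n + (i + 1) * p = 2 * n" unfolding n_def by simp
  ultimately show ?thesis using iter[of n "i + 1"] cong_mod_sym by metis
qed

lemma cong_mod_idempotent_minus_nilpotent:
  assumes E: "E \<in> R" "cong_mod (E * E) E" and w: "w \<in> R" "cong_mod (w ^ n) 0"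
  shows "cong_mod ((E - w) * (E * (\<Sum>i<n. w ^ i))) E"
proof -
  define geom where "geom = (\<Sum>i<n. w ^ i)"
  have geom: "geom \<in> R" unfolding geom_def using subring_power[OF subring w(1)] by (intro subring_sum[OF subring])
  have "(E - w) * (E * geom) = (E * E) * geom - w * E * geom" by (simp add: algebra_simps)
  also have "cong_mod \<dots> (E * geom - w * E * geom)"
    by (rule cong_mod_diff[OF cong_mod_mult_right[OF geom E(2)] cong_mod_refl])
  also have "E * geom - w * E * geom = E - E * w ^ n"
    using arg_cong[OF one_diff_power_eq[of w n], of "(*) E"] unfolding geom_def by (simp add: algebra_simps)
  also have "cong_mod \<dots> (E - 0)" by (rule cong_mod_diff[OF cong_mod_refl cong_mod_zero_mult[OF E(1) w(2)]])
  finally show ?thesis unfolding geom_def by simp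
qed

text \<open>A power \<open>f\<close> of \<open>g\<close> is idempotent and splits off from \<open>E\<close>; on the complement
  \<open>E (1 - f)\<close> the element \<open>g\<close> is nilpotent, so \<open>S\<close> alone still generates it.\<close>
lemma idempotent_split:
  assumes S: "S \<in> R" and g: "g \<in> R" and b: "b \<in> R" and E: "E \<in> R"
    and EE: "cong_mod (E * E) E" and gen: "cong_mod ((S + g) * b) E"
  obtains f c b' where "f \<in> R" "c \<in> R" "b' \<in> R" "cong_mod (f * f) f" "cong_mod (g * c) f"
    "cong_mod (S * b') (E * (1 - f))"
proof -
  note R = subring_mult[OF subring] subring_diff[OF subring] subring_one[OF subring]
    subring_power[OF subring]
  obtain n where n: "n \<ge> 1" "cong_mod (g ^ (2 * n)) (g ^ n)" using power_idempotent[OF g] by blast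
  define f where "f = g ^ n"
  define c where "c = g ^ (2 * n - 1)"
  have f: "f \<in> R" "1 - f \<in> R" and c: "c \<in> R" unfolding f_def c_def using g R by auto
  have ff: "cong_mod (f * f) f" using n(2) unfolding f_def by (simp add: power_add[symmetric] mult_2)
  have "g * c = g ^ (2 * n)" unfolding c_def using n(1) by (simp flip: power_Suc)
  then have gc: "cong_mod (g * c) f" using n(2) unfolding f_def by simp
  have f_compl: "cong_mod (f * (1 - f)) 0" by (rule cong_mod_idempotent_orthogonal_compl[OF ff])
  have compl_idem: "cong_mod ((1 - f) * (1 - f)) (1 - f)" by (rule cong_mod_idempotent_compl[OF ff])
  define E' where "E' = E * (1 - f)"
  have E': "E' \<in> R" unfolding E'_def using E f R by auto
  have E'E': "cong_mod (E' * E') E'" unfolding E'_def by (rule cong_mod_idempotent_mult[OF E f(2) EE compl_idem])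
  define w where "w = g * (1 - f) * b"
  have w: "w \<in> R" unfolding w_def using g f b R by auto
  have "cong_mod (f * (1 - f) ^ n) (f * (1 - f))"
    by (rule cong_mod_mult_left[OF f(1) cong_mod_idempotent_power[OF f(2) compl_idem n(1)]])
  then have "cong_mod ((g * (1 - f)) ^ n) 0"
    using cong_mod_trans[OF _ f_compl] unfolding f_def by (simp add: power_mult_distrib)
  then have "cong_mod (b ^ n * (g * (1 - f)) ^ n) 0" by (rule cong_mod_zero_mult[OF R(4)[OF b]])
  then have wn: "cong_mod (w ^ n) 0" unfolding w_def by (simp add: power_mult_distrib ac_simps)
  define b' where "b' = b * (1 - f) * (E' * (\<Sum>i<n. w ^ i))"
  have geom: "(\<Sum>i<n. w ^ i) \<in> R" using R(4)[OF w] by (intro subring_sum[OF subring])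
  have b': "b' \<in> R" unfolding b'_def using b f E' geom R(1) by blast
  have "cong_mod ((S + g) * b * (1 - f)) (E * (1 - f))" by (rule cong_mod_mult_right[OF f(2) gen])
  then have "cong_mod ((S + g) * b * (1 - f) - w) (E' - w)"
    unfolding E'_def by (rule cong_mod_diff[OF _ cong_mod_refl])
  moreover have "(S + g) * b * (1 - f) - w = S * b * (1 - f)" unfolding w_def by (simp add: algebra_simps)
  ultimately have "cong_mod (S * b * (1 - f)) (E' - w)" by simp
  then have "cong_mod (S * b * (1 - f) * (E' * (\<Sum>i<n. w ^ i))) ((E' - w) * (E' * (\<Sum>i<n. w ^ i)))"
    by (rule cong_mod_mult_right[OF R(1)[OF E' geom]])
  then have "cong_mod (S * b') ((E' - w) * (E' * (\<Sum>i<n. w ^ i)))" unfolding b'_def by (simp add: ac_simps)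
  also have "cong_mod \<dots> E'" by (rule cong_mod_idempotent_minus_nilpotent[OF E' E'E' w wn])
  finally have "cong_mod (S * b') E'" .
  then show ?thesis using that f(1) c b' ff gc unfolding E'_def by blast
qed

definition orthogonal_decomposition :: "'k \<Rightarrow> (nat \<Rightarrow> 'k) \<Rightarrow> nat \<Rightarrow> bool" where
  "orthogonal_decomposition E e k \<longleftrightarrow>
    (\<forall>i<k. e i \<in> R \<and> cong_mod (e i * e i) (e i) \<and> cong_mod (e i * E) (e i)) \<and>
    (\<forall>i<k. \<forall>j<k. i \<noteq> j \<longrightarrow> cong_mod (e i * e j) 0) \<and> cong_mod (\<Sum>i<k. e i) E"

lemma orthogonal_decomposition_extend:
  assumes e: "orthogonal_decomposition (E * (1 - f)) e k"
    and E: "E \<in> R" "cong_mod (E * E) E" and f: "f \<in> R" "cong_mod (f * f) f"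
  shows "orthogonal_decomposition E (e(k := E * f)) (Suc k)"
proof -
  define E' where "E' = E * (1 - f)"
  have R: "E * f \<in> R" "1 - f \<in> R" "E' \<in> R"
    unfolding E'_def using E f subring_mult[OF subring] subring_diff[OF subring subring_one[OF subring]]
    by auto
  have e': "\<forall>i<k. e i \<in> R \<and> cong_mod (e i * e i) (e i) \<and> cong_mod (e i * E') (e i)"
    "\<forall>i<k. \<forall>j<k. i \<noteq> j \<longrightarrow> cong_mod (e i * e j) 0" "cong_mod (\<Sum>i<k. e i) E'"
    using e unfolding orthogonal_decomposition_def E'_def by auto
  have "cong_mod (E' * E) E'"
    using cong_mod_mult_right[OF R(2) E(2)] unfolding E'_def by (simp add: ac_simps)
  then have e_E: "cong_mod (e i * E) (e i)" if "i < k" for i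
    using cong_mod_absorb_trans[OF _ E(1)] e'(1) that by blast
  have e_Ef: "cong_mod (e i * (E * f)) 0" if "i < k" for i
  proof -
    have "cong_mod (e i * (E * f)) (e i * E' * (E * f))"
      using cong_mod_mult_right[OF R(1) cong_mod_sym] e'(1) that by blast
    also have "e i * E' * (E * f) = (e i * E * E) * (f * (1 - f))" unfolding E'_def by (simp add: ac_simps)
    also have "cong_mod \<dots> 0"
      using e'(1) that E(1) subring_mult[OF subring]
      by (intro cong_mod_zero_mult[OF _ cong_mod_idempotent_orthogonal_compl[OF f(2)]]) auto
    finally show ?thesis .
  qed
  have "cong_mod ((E * E) * f) (E * f)" by (rule cong_mod_mult_right[OF f(1) E(2)])
  then have new: "cong_mod ((E * f) * (E * f)) (E * f)" "cong_mod ((E * f) * E) (E * f)"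
    using cong_mod_idempotent_mult[OF E(1) f(1) E(2) f(2)] by (simp_all add: ac_simps)
  have "cong_mod ((\<Sum>i<k. e i) + E * f) (E' + E * f)" by (rule cong_mod_add[OF e'(3) cong_mod_refl])
  then have "cong_mod (\<Sum>i<Suc k. (e(k := E * f)) i) E" unfolding E'_def by (simp add: algebra_simps)
  then show ?thesis
    unfolding orthogonal_decomposition_def
    using e'(1,2) e_E e_Ef new R(1) by (auto simp: less_Suc_eq mult.commute)
qed

lemma orthogonal_idempotents:
  fixes k :: nat
  assumes "\<forall>i<k. a i \<in> R" "E \<in> R" "cong_mod (E * E) E" "b \<in> R" "cong_mod ((\<Sum>i<k. a i) * b) E"
  shows "\<exists>e c. orthogonal_decomposition E e k \<and> (\<forall>i<k. c i \<in> R \<and> cong_mod (a i * c i) (e i))"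
  using assms
proof (induction k arbitrary: E b)
  case 0
  then show ?case by (simp add: orthogonal_decomposition_def)
next
  case (Suc k E b)
  note R = subring_mult[OF subring] subring_diff[OF subring] subring_one[OF subring]
  have S: "(\<Sum>i<k. a i) \<in> R" using Suc.prems(1) by (intro subring_sum[OF subring]) auto
  have gen: "cong_mod (((\<Sum>i<k. a i) + a k) * b) E" using Suc.prems(5) by simp
  obtain f c b' where f: "f \<in> R" "c \<in> R" "b' \<in> R" "cong_mod (f * f) f" "cong_mod (a k * c) f"
    "cong_mod ((\<Sum>i<k. a i) * b') (E * (1 - f))"
    using idempotent_split[OF S _ Suc.prems(4,2,3) gen] Suc.prems(1) by auto
  have "E * (1 - f) \<in> R" using Suc.prems(2) f(1) R by blast
  moreover have "cong_mod ((E * (1 - f)) * (E * (1 - f))) (E * (1 - f))"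
    by (rule cong_mod_idempotent_mult[OF Suc.prems(2) R(2)[OF R(3) f(1)] Suc.prems(3)
          cong_mod_idempotent_compl[OF f(4)]])
  ultimately obtain e c' where e: "orthogonal_decomposition (E * (1 - f)) e k"
    "\<forall>i<k. c' i \<in> R \<and> cong_mod (a i * c' i) (e i)"
    using Suc.IH[OF _ _ _ f(3,6)] Suc.prems(1) by auto
  have "cong_mod (a k * (E * c)) (E * f)"
    using cong_mod_mult_left[OF Suc.prems(2) f(5)] by (simp add: ac_simps)
  then have "\<forall>i<Suc k. (c'(k := E * c)) i \<in> R \<and> cong_mod (a i * (c'(k := E * c)) i) ((e(k := E * f)) i)"
    using e(2) R(1)[OF Suc.prems(2) f(2)] by (auto simp: less_Suc_eq)
  then show ?case
    using orthogonal_decomposition_extend[OF e(1) Suc.prems(2,3) f(1,4)] by blast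
qed

text \<open>With orthogonal idempotents \<open>e j \<in> U j V j R + I\<close>, the element \<open>x = \<Sum>j. e j U j\<close>
  satisfies \<open>e j c j x V j \<equiv> e j\<close>, and these products add up to \<open>1\<close> modulo \<open>I\<close>.\<close>
lemma exists_multiplier_cong_one:
  fixes k :: nat
  assumes Ni: "O_submodule R Ni" and A: "O_submodule R A" and prod: "\<forall>x\<in>Ni. \<forall>y\<in>A. x * y \<in> R"
    and U: "\<forall>j<k. U j \<in> Ni" and V: "\<forall>j<k. V j \<in> A" and sum: "(\<Sum>j<k. U j * V j) = 1"
  obtains e where "\<forall>j<k. e j \<in> R" "\<forall>j<k. \<exists>c\<in>R. cong_mod (U j * V j * c) (e j)"
    "cong_mod (\<Sum>j<k. e j) 1" "\<exists>z\<in>smul (\<Sum>j<k. e j * U j) A. cong_mod z 1"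
proof -
  note R = subring_mult[OF subring] subring_one[OF subring]
  have UV: "U i * V j \<in> R" if "i < k" "j < k" for i j using prod U V that by blast
  obtain e c where "orthogonal_decomposition 1 e k" "\<forall>j<k. c j \<in> R \<and> cong_mod (U j * V j * c j) (e j)"
    using orthogonal_idempotents[of k "\<lambda>j. U j * V j" 1 1] UV R(2) cong_mod_refl sum by auto
  then have e: "\<forall>j<k. e j \<in> R \<and> c j \<in> R \<and> cong_mod (e j * e j) (e j) \<and> cong_mod (U j * V j * c j) (e j)"
    "\<forall>i<k. \<forall>j<k. i \<noteq> j \<longrightarrow> cong_mod (e i * e j) 0" "cong_mod (\<Sum>j<k. e j) 1"
    unfolding orthogonal_decomposition_def by auto
  define x where "x = (\<Sum>j<k. e j * U j)"
  have summand: "cong_mod ((e j * c j) * (x * V j)) (e j)" if j: "j < k" for j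
  proof -
    define T where "T i = (e i * e j) * (c j * (U i * V j))" for i
    have "(e j * c j) * (x * V j) = (\<Sum>i<k. T i)"
      unfolding x_def T_def sum_distrib_left sum_distrib_right by (intro sum.cong) (simp_all add: ac_simps)
    also have "cong_mod \<dots> (\<Sum>i<k. if i = j then T j else 0)"
    proof (rule cong_mod_sum)
      fix i assume i: "i \<in> {..<k}"
      have "c j * (U i * V j) \<in> R" using R(1) e(1) UV i j by auto
      then have "i \<noteq> j \<Longrightarrow> cong_mod ((c j * (U i * V j)) * (e i * e j)) 0"
        using cong_mod_zero_mult e(2) i j by blast
      then have "i \<noteq> j \<Longrightarrow> cong_mod (T i) 0" unfolding T_def by (simp add: mult.commute)
      then show "cong_mod (T i) (if i = j then T j else 0)" by (auto simp: cong_mod_refl)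
    qed
    also have "(\<Sum>i<k. if i = j then T j else 0) = (e j * e j) * (c j * (U j * V j))"
      using j by (simp add: T_def)
    also have "\<dots> = (e j * e j) * (U j * V j * c j)" by (simp add: ac_simps)
    also have "cong_mod \<dots> (e j * e j)" using cong_mod_mult[OF R(1)] e(1) j by blast
    also have "cong_mod \<dots> (e j)" using e(1) j by blast
    finally show ?thesis .
  qed
  define z where "z = (\<Sum>j<k. (e j * c j) * (x * V j))"
  have "z \<in> smul x A"
    unfolding z_def using e(1) V R(1)
    by (intro submodule_sum[OF smul_submodule[OF A]] submodule_mult_left[OF smul_submodule[OF A]] smul_mem)
      auto
  moreover have "cong_mod z 1"
    using cong_mod_trans[OF cong_mod_sum[OF summand] e(3)] unfolding z_def by simp
  ultimately show ?thesis using that e unfolding x_def by blast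
qed

end

section \<open>Surjectivity of the extension map\<close>

lemma finite_quotient_order:
  assumes R: "is_order R" and N: "N \<noteq> 0"
  shows "finite_quotient R (smul (of_int N) R)"
proof
  show sr: "is_subring R" using R unfolding is_order_def by blast
  show "integral_ideal R (smul (of_int N) R)"
    unfolding integral_ideal_def
    using smul_submodule[OF subring_submodule[OF sr]] subring_mult[OF sr subring_of_int[OF sr]]
    by (auto simp: smul_def)
  show "\<exists>F. finite F \<and> (\<forall>x\<in>R. \<exists>y\<in>F. x - y \<in> smul (of_int N) R)"
    using R Z_span_finite_quotient[OF N] unfolding is_order_def by metis
qed

context ray_modulus begin

lemma coprime_ideal_near_one:
  assumes A: "integral_ideal R A" "ideal_add A m = R" and z: "z \<in> A" "z \<noteq> 0"
  obtains s where "s \<in> A" "s \<noteq> 0" "1 - s \<in> m"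
proof -
  obtain s y where s: "s \<in> A" "y \<in> m" "s + y = 1" using ideal_add_eq_iff[OF subring A(1) modulus] A(2) by blast
  show ?thesis
  proof (cases "s = 0")
    case False
    then show ?thesis using that s by (metis add_diff_cancel_left')
  next
    case True
    then have "1 \<in> m" using s by simp
    moreover have "1 - z \<in> R"
      using z A(1) subring_diff[OF subring subring_one[OF subring]] unfolding integral_ideal_def by blast
    ultimately have "(1 - z) * 1 \<in> m" by (rule submodule_mult_left[OF modulus_submodule, rotated])
    then show ?thesis using that z by simp
  qed
qed

lemma J_star_elements_near_one:
  assumes a: "a \<in> J_star R m" and Ni: "O_submodule R Ni" "ideal_mult a Ni = R"
  obtains t s where "t \<in> Ni" "t \<in> R" "1 - t \<in> m" "s \<in> a" "s \<in> S_m R m" "s \<noteq> 0" "1 - s \<in> m"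
proof -
  obtain a1 b1 where ab: "integral_ideal R a1" "integral_ideal R b1" "invertible_ideal R b1"
    "ideal_add a1 m = R" "ideal_add b1 m = R" "a = ideal_colon a1 b1"
    using a unfolding J_star_def coprime_to_def by blast
  have a1: "O_submodule R a1" "a1 \<subseteq> R" and b1: "b1 \<subseteq> R" using ab unfolding integral_ideal_def by auto
  have a1_a: "a1 \<subseteq> a" unfolding ab(6) ideal_colon_def using submodule_mult_right[OF a1(1)] b1 by blast
  have "Ni = ideal_colon R a"
    using ideal_colon_eq_ideal_mult[OF subring subring_submodule[OF subring] Ni(2)]
      ideal_mult_subring_left[OF subring Ni(1)] by simp
  then have b1_Ni: "b1 \<subseteq> Ni"
    using a1(2) unfolding ab(6) ideal_colon_def by (auto simp: mult.commute)
  obtain t y where t: "t \<in> b1" "y \<in> m" "t + y = 1" using ideal_add_eq_iff[OF subring ab(2) modulus] ab(5) by blast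
  then have "1 - t \<in> m" by (metis add_diff_cancel_left')
  moreover obtain s where s: "s \<in> a1" "s \<noteq> 0" "1 - s \<in> m"
  proof -
    obtain u where u: "u \<in> a" "u \<noteq> 0"
      using a fractional_ideal_nonzero invertible_ideal_fractional unfolding J_star_def by blast
    obtain v where v: "v \<in> b1" "v \<noteq> 0"
      using fractional_ideal_nonzero[OF invertible_ideal_fractional[OF ab(3)]] by blast
    have "u * v \<in> a1" "u * v \<noteq> 0" using u v unfolding ab(6) ideal_colon_def by auto
    then show ?thesis using that by (rule coprime_ideal_near_one[OF ab(1,4)])
  qed
  moreover have "s \<in> S_m R m"
    unfolding S_m_iff using s a1(2) subring_one[OF subring] by (intro conjI bexI[of _ 1] bexI[of _ "1 - s"]) auto
  ultimately show ?thesis using that t b1 b1_Ni a1_a by blast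
qed

text \<open>The relation is \<open>1 = t s + h \<Sum>i. u i v i\<close> with \<open>1 = \<Sum>i. u i v i\<close> in \<open>a\<inverse> a\<close>,
  \<open>t \<in> a\<inverse>\<close> and \<open>s \<in> a\<close> congruent to \<open>1\<close> modulo \<open>m\<close>, and \<open>h = 1 - t s \<in> m\<close>.\<close>
lemma unit_relation_near_one:
  assumes a: "a \<in> J_star R m" and Ni: "O_submodule R Ni" "ideal_mult a Ni = R"
  obtains k U V s where "\<forall>j<Suc k. U j \<in> Ni \<and> V j \<in> a" "(\<Sum>j<Suc k. U j * V j) = 1"
    "U 0 \<in> R" "1 - U 0 \<in> m" "V 0 = s" "s \<in> S_m R m" "s \<noteq> 0"
    "\<forall>j<k. U (Suc j) * V (Suc j) \<in> m \<and> U (Suc j) * s \<in> m"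
proof -
  note m = modulus_submodule
  obtain t s where ts: "t \<in> Ni" "t \<in> R" "1 - t \<in> m" "s \<in> a" "s \<in> S_m R m" "s \<noteq> 0" "1 - s \<in> m"
    using J_star_elements_near_one[OF a Ni] .
  define h where "h = 1 - t * s"
  have "h = (1 - t) + t * (1 - s)" unfolding h_def by (simp add: algebra_simps)
  then have h: "h \<in> m" "h \<in> R"
    using submodule_add[OF m ts(3) submodule_mult_left[OF m ts(2) ts(7)]] modulus_subset by auto
  have "1 \<in> ideal_mult Ni a" using Ni(2) subring_one[OF subring] by (simp add: ideal_mult_commute)
  then obtain k :: nat and u v where uv: "\<forall>i<k. u i \<in> Ni \<and> v i \<in> a" "1 = (\<Sum>i<k. u i * v i)"
    unfolding ideal_mult_def by blast
  define U where "U j = (if j = 0 then t else h * u (j - 1))" for j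
  define V where "V j = (if j = 0 then s else v (j - 1))" for j
  have "\<forall>j<Suc k. U j \<in> Ni \<and> V j \<in> a"
    using ts(1,4) uv(1) submodule_mult_left[OF Ni(1) h(2)] by (auto simp: U_def V_def less_Suc_eq_0_disj)
  moreover have "(\<Sum>j<Suc k. U j * V j) = t * s + h * (\<Sum>i<k. u i * v i)"
    unfolding sum.lessThan_Suc_shift by (simp add: U_def V_def sum_distrib_left mult.assoc)
  then have "(\<Sum>j<Suc k. U j * V j) = 1" using uv(2) unfolding h_def by simp
  moreover have "u i * v i \<in> R" "u i * s \<in> R" if "i < k" for i
    using ideal_mult_mem[of "v i" a "u i" Ni] ideal_mult_mem[of s a "u i" Ni] Ni(2) uv(1) ts(4) that
    by (simp_all add: mult.commute)
  then have "\<forall>j<k. U (Suc j) * V (Suc j) \<in> m \<and> U (Suc j) * s \<in> m"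
    using submodule_mult_right[OF m _ h(1)] by (simp add: U_def V_def mult.assoc)
  ultimately show ?thesis using that ts(2,3,5,6) unfolding U_def V_def by simp
qed

lemma exists_multiplier_near_one:
  assumes fq: "finite_quotient R I" and I_m: "I \<subseteq> m"
    and a: "a \<in> J_star R m" and Ni: "O_submodule R Ni" "ideal_mult a Ni = R"
  obtains x s where "x \<in> Ni" "s \<in> S_m R m" "s \<noteq> 0" "x * s - s \<in> m"
    "\<exists>z\<in>smul x a. finite_quotient.cong_mod I z 1"
proof -
  interpret finite_quotient R I by (rule fq)
  note m = modulus_submodule and R = subring_mult[OF subring]
  have prod: "\<forall>x\<in>Ni. \<forall>y\<in>a. x * y \<in> R"
    using ideal_mult_mem[of _ a _ Ni] Ni(2) by (metis mult.commute)
  obtain k U V s where UV: "\<forall>j<Suc k. U j \<in> Ni \<and> V j \<in> a" "(\<Sum>j<Suc k. U j * V j) = 1"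
    "U 0 \<in> R" "1 - U 0 \<in> m" "V 0 = s" "s \<in> S_m R m" "s \<noteq> 0"
    "\<forall>j<k. U (Suc j) * V (Suc j) \<in> m \<and> U (Suc j) * s \<in> m"
    using unit_relation_near_one[OF a Ni] .
  have s: "s \<in> R" using UV(6) S_m_subset by blast
  obtain e where e: "\<forall>j<Suc k. e j \<in> R" "\<forall>j<Suc k. \<exists>c\<in>R. cong_mod (U j * V j * c) (e j)"
    "cong_mod (\<Sum>j<Suc k. e j) 1" "\<exists>z\<in>smul (\<Sum>j<Suc k. e j * U j) a. cong_mod z 1"
    using exists_multiplier_cong_one[OF Ni(1) J_star_submodule[OF a] prod] UV(1,2) by blast
  define x where "x = (\<Sum>j<Suc k. e j * U j)"
  have "x \<in> Ni" unfolding x_def using e(1) UV(1) by (intro submodule_sum[OF Ni(1)] submodule_mult_left[OF Ni(1)]) auto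
  have e_m: "e (Suc i) \<in> m" if i: "i < k" for i
  proof -
    obtain c where c: "c \<in> R" "e (Suc i) - U (Suc i) * V (Suc i) * c \<in> I"
      using e(2) i cong_mod_sym unfolding cong_mod_def by fastforce
    have "U (Suc i) * V (Suc i) * c \<in> m" using submodule_mult_right[OF m c(1)] UV(8) i by blast
    from submodule_add[OF m this subsetD[OF I_m c(2)]] show ?thesis by simp
  qed
  have "(\<Sum>j<Suc k. e j) - 1 \<in> m" using e(3) I_m unfolding cong_mod_def by blast
  moreover have "(\<Sum>j<Suc k. e j) = e 0 + (\<Sum>i<k. e (Suc i))" by (rule sum.lessThan_Suc_shift)
  moreover have "(\<Sum>i<k. e (Suc i)) \<in> m" using e_m by (intro submodule_sum[OF m]) auto
  ultimately have e0: "e 0 - 1 \<in> m"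
    using submodule_diff[OF m, of "(\<Sum>j<Suc k. e j) - 1" "\<Sum>i<k. e (Suc i)"] by (simp add: algebra_simps)
  have "(e 0 - 1) * (U 0 * s) \<in> m" using R[OF UV(3) s] by (rule submodule_mult_right[OF m _ e0])
  moreover have "(1 - U 0) * s \<in> m" by (rule submodule_mult_right[OF m s UV(4)])
  moreover have "(\<Sum>i<k. e (Suc i) * (U (Suc i) * s)) \<in> m"
  proof (rule submodule_sum[OF m])
    fix i assume "i \<in> {..<k}"
    then show "e (Suc i) * (U (Suc i) * s) \<in> m" using submodule_mult_left[OF m] e(1) UV(8) by simp
  qed
  moreover have "x * s - s = (e 0 - 1) * (U 0 * s) - (1 - U 0) * s + (\<Sum>i<k. e (Suc i) * (U (Suc i) * s))"
    unfolding x_def sum.lessThan_Suc_shift by (simp add: algebra_simps sum_distrib_left)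
  ultimately have "x * s - s \<in> m" using submodule_add[OF m] submodule_diff[OF m] by presburger
  then show ?thesis using that \<open>x \<in> Ni\<close> UV(6,7) e(4) unfolding x_def by blast
qed

text \<open>Adding a large multiple of \<open>M\<close> does not change \<open>x\<close> modulo \<open>m\<close> but makes it totally positive,
  since the real embeddings of \<open>x\<close> are bounded.\<close>
lemma exists_ray_element_translate:
  assumes nf: "number_field TYPE('k)" and M: "M \<noteq> 0" "\<forall>r\<in>R. of_int M * r \<in> m"
    and s: "s \<in> S_m R m" "s \<noteq> 0" and x: "x * s - s \<in> m"
  shows "\<exists>L. M dvd L \<and> x + of_int L \<in> ray_elements R m \<Sigma>"
proof -
  obtain B :: int where B: "\<forall>\<rho>. real_embedding \<rho> \<longrightarrow> \<bar>\<rho> x\<bar> < of_int B"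
    using real_embeddings_bounded[OF nf] by blast
  define K0 where "K0 = max B 1"
  define K where "K = (if x + of_int (M * M * K0) = 0 then K0 + 1 else K0)"
  define L where "L = M * M * K"
  have MM: "M * M \<ge> 1"
    using M(1) by (auto simp: int_one_le_iff_zero_less zero_less_mult_iff linorder_neq_iff)
  have K: "K \<ge> 1" "K \<ge> B" unfolding K_def K0_def by auto
  have "L \<ge> K" unfolding L_def using mult_right_mono[OF MM, of K] K by simp
  have "x + of_int L \<noteq> 0"
  proof (cases "x + of_int (M * M * K0) = 0")
    case True
    then have "x + of_int L = of_int (M * M)" unfolding L_def K_def by (simp add: algebra_simps)
    then show ?thesis using M(1) by simp
  qed (simp add: L_def K_def)
  moreover have "x + of_int L - 1 = (x * s - s + of_int M * (of_int (M * K) * s)) / s"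
    using s(2) unfolding L_def by (simp add: field_simps)
  moreover have "x * s - s + of_int M * (of_int (M * K) * s) \<in> m"
    using submodule_add[OF modulus_submodule x] M(2) subring_mult[OF subring subring_of_int[OF subring]
        S_m_subset[OF s(1)]] by blast
  moreover have "\<rho> (x + of_int L) > 0" if "\<rho> \<in> \<Sigma>" for \<rho>
  proof -
    have \<rho>: "real_embedding \<rho>" using embeddings that by blast
    have "\<rho> (x + of_int L) = \<rho> x + of_int L"
      by (simp add: real_embedding_add[OF \<rho>] real_embedding_of_int[OF \<rho>])
    moreover have "\<bar>\<rho> x\<bar> < of_int B" using B \<rho> by blast
    moreover have "(of_int B :: real) \<le> of_int L" using K \<open>L \<ge> K\<close> by linarith
    ultimately show ?thesis by linarith
  qed
  ultimately have "x + of_int L \<in> ray_elements R m \<Sigma>" unfolding ray_elements_def using s by blast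
  moreover have "M dvd L" unfolding L_def by simp
  ultimately show ?thesis by blast
qed

lemma exists_ray_multiple_coprime:
  assumes nf: "number_field TYPE('k)" and order: "is_order R"
    and N: "N \<noteq> 0" "\<forall>r\<in>R. of_int N * r \<in> m" and a: "a \<in> J_star R m"
  obtains \<alpha> c y where "\<alpha> \<in> ray_elements R m \<Sigma>" "smul \<alpha> a \<subseteq> R" "O_submodule R c"
    "ideal_mult (smul \<alpha> a) c = R" "y \<in> R" "1 - of_int N * y \<in> smul \<alpha> a"
proof -
  note int = subring_of_int[OF subring] and R = subring_mult[OF subring]
  obtain Ni where Ni: "fractional_ideal R Ni" "ideal_mult a Ni = R"
    using a unfolding J_star_def invertible_ideal_def by blast
  have Ni_sub: "O_submodule R Ni" by (rule fractional_ideal_submodule[OF Ni(1)])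
  have prod: "x * y \<in> R" if "x \<in> Ni" "y \<in> a" for x y
    using that ideal_mult_mem[of y a x Ni] Ni(2) by (simp add: mult.commute)
  interpret fq: finite_quotient R "smul (of_int N) R" by (rule finite_quotient_order[OF order N(1)])
  have "smul (of_int N) R \<subseteq> m" using N(2) unfolding smul_def by blast
  then obtain x s where x: "x \<in> Ni" "s \<in> S_m R m" "s \<noteq> 0" "x * s - s \<in> m"
    "\<exists>z\<in>smul x a. fq.cong_mod z 1"
    using exists_multiplier_near_one[OF fq.finite_quotient_axioms _ a Ni_sub Ni(2)] by blast
  then obtain v r' where v': "v \<in> a" "r' \<in> R" "x * v - 1 = of_int N * r'"
    unfolding fq.cong_mod_def unfolding smul_def by blast
  define r where "r = - r'"
  have v: "v \<in> a" "r \<in> R" "x * v = 1 - of_int N * r"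
    using v' subring_diff[OF subring subring_zero[OF subring] v'(2)] unfolding r_def
    by (simp_all add: algebra_simps)
  obtain n where "n \<in> Ni" "n \<noteq> 0" using fractional_ideal_nonzero[OF Ni(1)] by blast
  then obtain D where D: "D \<noteq> 0" "of_int D \<in> Ni" by (rule order_submodule_int_mem[OF nf order Ni_sub])
  have "N * D \<noteq> 0" using N(1) D(1) by simp
  moreover have "\<forall>r\<in>R. of_int (N * D) * r \<in> m" using N(2) R[OF int] by (simp add: mult.assoc)
  ultimately obtain L where L: "(N * D) dvd L" "x + of_int L \<in> ray_elements R m \<Sigma>"
    using exists_ray_element_translate[OF nf _ _ x(2-4)] by blast
  then obtain q where q: "L = N * D * q" by (auto elim: dvdE)
  define \<alpha> where "\<alpha> = x + of_int L"
  have "of_int (N * q) * (of_int D :: 'k) \<in> Ni" by (rule submodule_mult_left[OF Ni_sub int D(2)])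
  moreover have "of_int L = of_int (N * q) * (of_int D :: 'k)" unfolding q by (simp add: ac_simps)
  ultimately have "\<alpha> \<in> Ni" unfolding \<alpha>_def using submodule_add[OF Ni_sub x(1)] by simp
  then have "smul \<alpha> a \<subseteq> R" unfolding smul_def using prod by auto
  moreover have "\<alpha> \<noteq> 0" using L(2) unfolding \<alpha>_def ray_elements_def by blast
  then have "ideal_mult (smul \<alpha> a) (smul (inverse \<alpha>) Ni) = R"
    using Ni(2) by (simp add: ideal_mult_smul_left ideal_mult_smul_right smul_smul)
  moreover have "r - of_int q * (of_int D * v) \<in> R"
    using v prod[OF D(2) v(1)] by (simp add: subring_diff[OF subring] R[OF int] mult.commute)
  moreover have "\<alpha> * v = 1 - of_int N * (r - of_int q * (of_int D * v))"
    unfolding \<alpha>_def q using v(3) by (simp add: algebra_simps)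
  then have "1 - of_int N * (r - of_int q * (of_int D * v)) \<in> smul \<alpha> a" using smul_mem[OF v(1)] by metis
  ultimately show ?thesis using that L(2) smul_submodule[OF Ni_sub] unfolding \<alpha>_def by blast
qed

end

context level_extension begin

lemma contraction_integral_ideal:
  assumes "O_submodule R' b"
  shows "integral_ideal R (b \<inter> R)"
  unfolding integral_ideal_def
  using submodule_Int[OF submodule_subring_mono[OF assms order_subset] subring_submodule[OF src.subring]]
  by blast

lemma modulus_multiple_subset:
  assumes "\<forall>x\<in>R'. of_int N * x \<in> m" "x \<in> R'"
  shows "of_int N * x \<in> R"
  using assms src.modulus_subset by blast

lemma ideal_mult_contraction:
  assumes N: "\<forall>x\<in>R'. of_int N * x \<in> m" and b: "O_submodule R' b" "b \<subseteq> R'"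
    and y: "y \<in> R'" "1 - of_int N * y \<in> b"
  shows "ideal_mult (b \<inter> R) R' = b"
proof
  show "ideal_mult (b \<inter> R) R' \<subseteq> b"
  proof (rule ideal_mult_subsetI)
    fix p q assume "p \<in> b \<inter> R" "q \<in> R'"
    then show "p * q \<in> b" using submodule_mult_right[OF b(1)] by blast
  qed (simp_all add: submodule_zero[OF b(1)] submodule_add[OF b(1)])
  show "b \<subseteq> ideal_mult (b \<inter> R) R'"
  proof
    fix z assume z: "z \<in> b"
    have "of_int N * y \<in> R" by (rule modulus_multiple_subset[OF N y(1)])
    then have "1 - of_int N * y \<in> R" by (rule subring_diff[OF src.subring subring_one[OF src.subring]])
    then have "1 - of_int N * y \<in> b \<inter> R" using y(2) by simp
    moreover have z': "z \<in> R'" using b(2) z by (rule subsetD)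
    ultimately have "(1 - of_int N * y) * z \<in> ideal_mult (b \<inter> R) R'" by (rule ideal_mult_mem)
    moreover have "of_int N * z \<in> b" by (rule submodule_mult_left[OF b(1) subring_of_int[OF tgt.subring] z])
    then have "of_int N * z \<in> b \<inter> R" using modulus_multiple_subset[OF N z'] by simp
    then have "(of_int N * z) * y \<in> ideal_mult (b \<inter> R) R'" using y(1) by (rule ideal_mult_mem)
    ultimately have "(1 - of_int N * y) * z + (of_int N * z) * y \<in> ideal_mult (b \<inter> R) R'"
      by (rule ideal_mult_add)
    then show "z \<in> ideal_mult (b \<inter> R) R'" by (simp add: algebra_simps)
  qed
qed

lemma int_in_contraction_mult_colon:
  assumes N: "\<forall>x\<in>R'. of_int N * x \<in> m"
    and b: "O_submodule R' b" "b \<subseteq> R'" "O_submodule R' c" "ideal_mult b c = R'"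
    and y: "y \<in> R'" "1 - of_int N * y \<in> b"
  shows "of_int N \<in> ideal_mult (b \<inter> R) (ideal_colon R (b \<inter> R))"
proof -
  have "ideal_mult (b \<inter> R) c = ideal_mult (b \<inter> R) (ideal_mult R' c)"
    using ideal_mult_subring_left[OF tgt.subring b(3)] by simp
  also have "\<dots> = ideal_mult (ideal_mult (b \<inter> R) R') c" by (simp add: ideal_mult_assoc)
  also have "\<dots> = R'" using ideal_mult_contraction[OF N b(1,2) y] b(4) by simp
  finally have "1 \<in> ideal_mult (b \<inter> R) c" using subring_one[OF tgt.subring] by simp
  then have "of_int N * 1 \<in> ideal_mult (b \<inter> R) (ideal_colon R (b \<inter> R))"
  proof (induction rule: ideal_mult_induct)
    case (mult p q)
    have "of_int N * q \<in> ideal_colon R (b \<inter> R)"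
      unfolding ideal_colon_def
    proof (intro CollectI ballI)
      fix w assume "w \<in> b \<inter> R"
      then have "w * q \<in> R'" using ideal_mult_mem[of w b q c] mult(2) b(4) by blast
      then have "of_int N * (w * q) \<in> R" by (rule modulus_multiple_subset[OF N])
      then show "of_int N * q * w \<in> R" by (simp add: ac_simps)
    qed
    then have "p * (of_int N * q) \<in> ideal_mult (b \<inter> R) (ideal_colon R (b \<inter> R))"
      by (rule ideal_mult_mem[OF mult(1)])
    then show ?case by (simp add: ac_simps)
  qed (simp_all add: zero_in_ideal_mult ideal_mult_add distrib_left)
  then show ?thesis by simp
qed

text \<open>With \<open>v = 1 - N y \<in> b \<inter> R\<close>, the identity \<open>1 = v (1 + N y) + N y\<^sup>2 \<cdot> N\<close> exhibits \<open>1\<close> in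
  \<open>(b \<inter> R) (R : b \<inter> R)\<close>.\<close>
lemma contraction_invertible:
  assumes N: "N \<noteq> 0" "\<forall>x\<in>R'. of_int N * x \<in> m"
    and b: "O_submodule R' b" "b \<subseteq> R'" "O_submodule R' c" "ideal_mult b c = R'"
    and y: "y \<in> R'" "1 - of_int N * y \<in> b"
  shows "invertible_ideal R (b \<inter> R)"
proof -
  define a where "a = b \<inter> R"
  define C where "C = ideal_colon R a"
  note int_R = modulus_multiple_subset[OF N(2)] and one = subring_one[OF src.subring]
  have a: "integral_ideal R a" unfolding a_def by (rule contraction_integral_ideal[OF b(1)])
  have aC: "O_submodule R (ideal_mult a C)"
    unfolding C_def by (rule ideal_mult_submodule[OF ideal_colon_submodule[OF src.subring]])
  have "1 - of_int N * y \<in> a"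
    using y int_R[OF y(1)] subring_diff[OF src.subring one] unfolding a_def by blast
  moreover have "1 \<in> C" using a unfolding C_def ideal_colon_def integral_ideal_def by auto
  ultimately have v_aC: "1 - of_int N * y \<in> ideal_mult a C" using ideal_mult_mem by fastforce
  have N_aC: "of_int N \<in> ideal_mult a C"
    unfolding a_def C_def by (rule int_in_contraction_mult_colon[OF N(2) b y])
  have "1 + of_int N * y \<in> R" using subring_add[OF src.subring one int_R[OF y(1)]] .
  then have "(1 - of_int N * y) * (1 + of_int N * y) \<in> ideal_mult a C"
    by (rule submodule_mult_right[OF aC _ v_aC])
  moreover have "(of_int N * (y * y)) * of_int N \<in> ideal_mult a C"
    using submodule_mult_left[OF aC int_R[OF subring_mult[OF tgt.subring y(1) y(1)]] N_aC] .
  ultimately have "(1 - of_int N * y) * (1 + of_int N * y) + (of_int N * (y * y)) * of_int N \<in> ideal_mult a C"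
    by (rule submodule_add[OF aC])
  then have "1 \<in> ideal_mult a C" by (simp add: algebra_simps)
  moreover have "\<not> b \<subseteq> {0}"
  proof
    assume "b \<subseteq> {0}"
    then have "ideal_mult b c \<subseteq> {0}" by (intro ideal_mult_subsetI) auto
    then show False using b(4) subring_one[OF tgt.subring] by auto
  qed
  then obtain z where z: "z \<in> b" "z \<noteq> 0" by blast
  then have "of_int N * z \<in> a" "of_int N * z \<noteq> 0"
    using submodule_mult_left[OF b(1) subring_of_int[OF tgt.subring] z(1)] int_R b(2) N(1)
    unfolding a_def by auto
  ultimately show ?thesis
    using invertible_ideal_if_one_in_mult_colon[OF src.subring a] unfolding a_def C_def by blast
qed

lemma J_star_contraction:
  assumes N: "N \<noteq> 0" "\<forall>x\<in>R'. of_int N * x \<in> m"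
    and b: "O_submodule R' b" "b \<subseteq> R'" "O_submodule R' c" "ideal_mult b c = R'"
    and y: "y \<in> R'" "1 - of_int N * y \<in> b"
  shows "b \<inter> R \<in> J_star R m"
proof -
  note one = subring_one[OF src.subring]
  have R: "integral_ideal R R" unfolding integral_ideal_def using subring_submodule[OF src.subring] by blast
  have RR: "ideal_mult R R = R" by (rule ideal_mult_subring_self[OF src.subring])
  have "fractional_ideal R R"
    unfolding fractional_ideal_def using subring_submodule[OF src.subring] one by (intro conjI bexI[of _ 1]) auto
  then have R_inv: "invertible_ideal R R" unfolding invertible_ideal_def using RR by blast
  have a: "integral_ideal R (b \<inter> R)" by (rule contraction_integral_ideal[OF b(1)])
  have Ny: "of_int N * y \<in> m" using N(2) y(1) by blast
  then have "1 - of_int N * y \<in> R" using src.modulus_subset subring_diff[OF src.subring one] by blast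
  then have "1 - of_int N * y \<in> b \<inter> R" using y(2) by simp
  then have "ideal_add (b \<inter> R) m = R"
    unfolding ideal_add_eq_iff[OF src.subring a src.modulus] using Ny by force
  moreover have "ideal_add R m = R"
    unfolding ideal_add_eq_iff[OF src.subring R src.modulus] using one submodule_zero[OF src.modulus_submodule]
    by force
  moreover have "b \<inter> R = ideal_mult (b \<inter> R) R"
    using ideal_mult_subring_right[OF src.subring] a unfolding integral_ideal_def by simp
  ultimately show ?thesis
    by (rule J_starI[OF src.subring a R R_inv _ _ RR _ contraction_invertible[OF N b y]])
qed

lemma ext_map_surjective:
  assumes nf: "number_field TYPE('k)"
  shows "ext_map ` carrier (ray_class_group R m \<Sigma>) = carrier (ray_class_group R' m' \<Sigma>')"
proof
  show "ext_map ` carrier (ray_class_group R m \<Sigma>) \<subseteq> carrier (ray_class_group R' m' \<Sigma>')"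
    using ext_map_is_ext_map unfolding is_ext_map_def hom_def by blast
  show "carrier (ray_class_group R' m' \<Sigma>') \<subseteq> ext_map ` carrier (ray_class_group R m \<Sigma>)"
  proof
    fix Y assume "Y \<in> carrier (ray_class_group R' m' \<Sigma>')"
    then obtain a' where a': "a' \<in> J_star R' m'" "Y = ideal_class R' m' \<Sigma>' a'"
      unfolding tgt.carrier_ray_class_group by blast
    have orders: "is_order R" "is_order R'" and "m \<noteq> {0}"
      using level level' unfolding level_datum_def by auto
    then obtain N where N: "N \<noteq> 0" "\<forall>x\<in>R'. of_int N * x \<in> m"
      using order_int_multiple_in_modulus[OF nf _ _ src.modulus] by blast
    then have "\<forall>x\<in>R'. of_int N * x \<in> m'" using modulus_subset_target by blast
    then obtain \<alpha> c y where b: "\<alpha> \<in> ray_elements R' m' \<Sigma>'" "smul \<alpha> a' \<subseteq> R'" "O_submodule R' c"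
      "ideal_mult (smul \<alpha> a') c = R'" "y \<in> R'" "1 - of_int N * y \<in> smul \<alpha> a'"
      using tgt.exists_ray_multiple_coprime[OF nf orders(2) N(1) _ a'(1)] by blast
    have b_sub: "O_submodule R' (smul \<alpha> a')" by (rule smul_submodule[OF J_star_submodule[OF a'(1)]])
    have "smul \<alpha> a' \<inter> R \<in> J_star R m" by (rule J_star_contraction[OF N b_sub b(2-6)])
    moreover have "ext_map (ideal_class R m \<Sigma> (smul \<alpha> a' \<inter> R)) = Y"
      using ext_map_ideal_class[OF calculation] ideal_mult_contraction[OF N(2) b_sub b(2,5,6)]
        tgt.ideal_class_smul[OF J_star_submodule[OF a'(1)] b(1)] a'(2) by simp
    ultimately show "Y \<in> ext_map ` carrier (ray_class_group R m \<Sigma>)"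
      unfolding src.carrier_ray_class_group by blast
  qed
qed

end

theorem lemma5p13:
  fixes Ord Ord' Ord'' m m' m'' :: "'k::field_char_0 set"
    and \<Sigma> \<Sigma>' \<Sigma>'' :: "('k \<Rightarrow> real) set"
  assumes "number_field TYPE('k)"
    and "level_datum Ord m \<Sigma>" and "level_datum Ord' m' \<Sigma>'"
    and "Ord \<subseteq> Ord'" and "ideal_mult m Ord' \<subseteq> m'" and "\<Sigma>' \<subseteq> \<Sigma>"
  shows "(\<exists>h. is_ext_map Ord m \<Sigma> Ord' m' \<Sigma>' h \<and>
             (\<forall>h'. is_ext_map Ord m \<Sigma> Ord' m' \<Sigma>' h' \<longrightarrow>
                (\<forall>x\<in>carrier (ray_class_group Ord m \<Sigma>). h' x = h x)) \<and>
             h ` carrier (ray_class_group Ord m \<Sigma>) = carrier (ray_class_group Ord' m' \<Sigma>')) \<and>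
         (level_datum Ord'' m'' \<Sigma>'' \<and> Ord' \<subseteq> Ord'' \<and> ideal_mult m' Ord'' \<subseteq> m'' \<and> \<Sigma>'' \<subseteq> \<Sigma>' \<longrightarrow>
            (\<forall>h1 h2 h3. is_ext_map Ord m \<Sigma> Ord' m' \<Sigma>' h1 \<and> is_ext_map Ord' m' \<Sigma>' Ord'' m'' \<Sigma>'' h2 \<and>
                 is_ext_map Ord m \<Sigma> Ord'' m'' \<Sigma>'' h3 \<longrightarrow>
               (\<forall>x\<in>carrier (ray_class_group Ord m \<Sigma>). h2 (h1 x) = h3 x)))"
proof (intro conjI impI allI ballI)
  interpret e: level_extension Ord m \<Sigma> Ord' m' \<Sigma>' using assms(2-6) by unfold_locales
  show "\<exists>h. is_ext_map Ord m \<Sigma> Ord' m' \<Sigma>' h \<and>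
      (\<forall>h'. is_ext_map Ord m \<Sigma> Ord' m' \<Sigma>' h' \<longrightarrow> (\<forall>x\<in>carrier (ray_class_group Ord m \<Sigma>). h' x = h x)) \<and>
      h ` carrier (ray_class_group Ord m \<Sigma>) = carrier (ray_class_group Ord' m' \<Sigma>')"
    using e.ext_map_is_ext_map e.is_ext_map_unique e.ext_map_surjective[OF assms(1)] by blast
next
  fix h1 h2 h3 x
  assume "level_datum Ord'' m'' \<Sigma>'' \<and> Ord' \<subseteq> Ord'' \<and> ideal_mult m' Ord'' \<subseteq> m'' \<and> \<Sigma>'' \<subseteq> \<Sigma>'"
    and "is_ext_map Ord m \<Sigma> Ord' m' \<Sigma>' h1 \<and> is_ext_map Ord' m' \<Sigma>' Ord'' m'' \<Sigma>'' h2 \<and>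
      is_ext_map Ord m \<Sigma> Ord'' m'' \<Sigma>'' h3"
    and "x \<in> carrier (ray_class_group Ord m \<Sigma>)"
  moreover have "level_extension Ord m \<Sigma> Ord' m' \<Sigma>'" using assms(2-6) by unfold_locales
  ultimately show "h2 (h1 x) = h3 x"
    using is_ext_map_comp[of Ord m \<Sigma> Ord' m' \<Sigma>' Ord'' m'' \<Sigma>''] assms(3) level_extension.intro by blast
qed

end
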